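(* Let $(R,\mathfrak m,k)$ be a Noetherian local ring of dimension $d$, $j\ge2$, and $M$ a finitely generated $R$-module with $\operatorname{pd}_RM=1$. If $M$ satisfies the $(SW_j)$ condition and $\beta_1^R(M)\ge d$, then $\beta_t^R(\mathcal S_j(M))\ge\binom{d}{t}$ for all $t=0,1,\dots,\operatorname{pd}_R\mathcal S_j(M)$.
   Context: $\beta_i^R(N)$ is the $i$-th Betti number (rank of the $i$-th module in a minimal free resolution of $N$). $\mathcal S_j(M)$ is the $j$-th graded component of the symmetric algebra $\mathcal S_R(M)$. For a free module $F$ of finite rank, $D_a(F)$ is the $a$-th divided power and $\Lambda^aF$ the $a$-th exterior power. For a minimal free resolution $\mathbf F_\bullet:0\to F_1\xrightarrow{\phi_1}F_0$ of $M$ (i.e. $\operatorname{Im}\phi_1\subseteq\mathfrak mF_0$), the complex $\mathcal S_j\mathbf F_\bullet$ is $0\to D_{j-l}F_0\otimes\Lambda^lF_1\to\cdots\to D_{j-1}F_0\otimes\Lambda^1F_1\to D_jF_0$, $l=\min\{\operatorname{rank}F_1,j\}$, with $(\mathcal S_j\mathbf F_\bullet)_t=D_{j-t}F_0\otimes\Lambda^tF_1$ and differential (up to sign) $f_1^{(c_1)}\cdots f_r^{(c_r)}\otimes(e_{1}\wedge\cdots\wedge e_{t})\mapsto\sum_s(-1)^s f_1^{(c_1)}\cdots f_r^{(c_r)}\cup\phi_1(e_{s})\otimes e_1\wedge\cdots\widehat{e_s}\cdots\wedge e_t$, where $\cup$ multiplies a divided power monomial by a basis element $f_m$ by raising the exponent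 of $f_m$ by one (extended linearly). $M$ satisfies the $(SW_j)$ condition if $\mathcal S_j\mathbf F_\bullet$ is a finite free resolution of $\mathcal S_j(M)$. Standing assumption: the characteristic of $R$ is such that this construction is a complex (e.g. small integers invertible in $R$). *)

theory Defs
  imports "HOL-Algebra.Ring_Divisibility" "HOL-Algebra.Module" "HOL-Algebra.Ideal"
    "HOL-Library.Multiset" "HOL-Library.Extended_Nat"
begin

definition local_ring :: "'a ring \<Rightarrow> bool" where
  "local_ring R \<longleftrightarrow> cring R \<and> noetherian_ring R \<and> (\<exists>!I. maximalideal I R)"

definition max_ideal :: "'a ring \<Rightarrow> 'a set" where
  "max_ideal R = (THE I. maximalideal I R)"

definition krull_dim :: "'a ring \<Rightarrow> enat" where
  "krull_dim R = Sup {enat n | n. \<exists>P. (\<forall>i\<le>n. primeideal (P i) R) \<and> (\<forall>i<n. P i \<subset> P (Suc i))}"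

definition span :: "'a ring \<Rightarrow> ('a, 'b) module \<Rightarrow> 'b set \<Rightarrow> 'b set" where
  "span R M S = \<Inter>{K. submodule K R M \<and> S \<subseteq> K}"

definition fin_gen :: "'a ring \<Rightarrow> ('a, 'b) module \<Rightarrow> bool" where
  "fin_gen R M \<longleftrightarrow> (\<exists>S. finite S \<and> S \<subseteq> carrier M \<and> span R M S = carrier M)"

definition lin_map :: "'a ring \<Rightarrow> ('a, 'b) module \<Rightarrow> ('a, 'c) module \<Rightarrow> ('b \<Rightarrow> 'c) \<Rightarrow> bool" where
  "lin_map R M N f \<longleftrightarrow> f \<in> carrier M \<rightarrow> carrier N
     \<and> (\<forall>x\<in>carrier M. \<forall>y\<in>carrier M. f (x \<oplus>\<^bsub>M\<^esub> y) = f x \<oplus>\<^bsub>N\<^esub> f y)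
     \<and> (\<forall>r\<in>carrier R. \<forall>x\<in>carrier M. f (r \<odot>\<^bsub>M\<^esub> x) = r \<odot>\<^bsub>N\<^esub> f x)"

definition lin_ker :: "('a, 'b) module \<Rightarrow> ('a, 'c) module \<Rightarrow> ('b \<Rightarrow> 'c) \<Rightarrow> 'b set" where
  "lin_ker M N f = {x \<in> carrier M. f x = \<zero>\<^bsub>N\<^esub>}"

definition free_on :: "'a ring \<Rightarrow> 'c set \<Rightarrow> ('a, 'c \<Rightarrow> 'a) module" where
  "free_on R B = \<lparr> carrier = {v. (\<forall>x\<in>B. v x \<in> carrier R) \<and> (\<forall>x. x \<notin> B \<longrightarrow> v x = \<zero>\<^bsub>R\<^esub>)
                                  \<and> finite {x. v x \<noteq> \<zero>\<^bsub>R\<^esub>}},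
                   monoid.mult = (\<lambda>v w. undefined), one = undefined,
                   zero = (\<lambda>x. \<zero>\<^bsub>R\<^esub>),
                   add = (\<lambda>v w x. v x \<oplus>\<^bsub>R\<^esub> w x),
                   smult = (\<lambda>r v x. r \<otimes>\<^bsub>R\<^esub> v x) \<rparr>"

definition quot_mod :: "'a ring \<Rightarrow> ('a, 'b) module \<Rightarrow> 'b set \<Rightarrow> ('a, 'b set) module" where
  "quot_mod R M K = \<lparr> carrier = (\<lambda>x. (\<lambda>k. x \<oplus>\<^bsub>M\<^esub> k) ` K) ` carrier M,
                   monoid.mult = (\<lambda>C D. undefined), one = undefined,
                   zero = K,
                   add = (\<lambda>C D. {c \<oplus>\<^bsub>M\<^esub> e | c e. c \<in> C \<and> e \<in> D}),
                   smult = (\<lambda>r C. {r \<odot>\<^bsub>M\<^esub> c \<oplus>\<^bsub>M\<^esub> k | c k. c \<in> C \<and> k \<in> K}) \<rparr>"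

definition is_resolution :: "'a ring \<Rightarrow> ('a, 'b) module \<Rightarrow> (nat \<Rightarrow> ('a, 'c) module)
     \<Rightarrow> (nat \<Rightarrow> 'c \<Rightarrow> 'c) \<Rightarrow> ('c \<Rightarrow> 'b) \<Rightarrow> bool" where
  "is_resolution R N F d eps \<longleftrightarrow> module R N \<and> (\<forall>i. module R (F i))
     \<and> (\<forall>i. lin_map R (F (Suc i)) (F i) (d (Suc i)))
     \<and> lin_map R (F 0) N eps \<and> eps ` carrier (F 0) = carrier N
     \<and> lin_ker (F 0) N eps = d 1 ` carrier (F 1)
     \<and> (\<forall>i\<ge>1. lin_ker (F i) (F (i - 1)) (d i) = d (Suc i) ` carrier (F (Suc i)))"

definition minimal_complex :: "'a ring \<Rightarrow> (nat \<Rightarrow> ('a, 'c) module) \<Rightarrow> (nat \<Rightarrow> 'c \<Rightarrow> 'c) \<Rightarrow> bool" where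
  "minimal_complex R F d \<longleftrightarrow> (\<forall>i. d (Suc i) ` carrier (F (Suc i))
      \<subseteq> span R (F i) {r \<odot>\<^bsub>F i\<^esub> x | r x. r \<in> max_ideal R \<and> x \<in> carrier (F i)})"

definition min_free_res :: "'a ring \<Rightarrow> ('a, 'b) module \<Rightarrow> (nat \<Rightarrow> nat)
     \<Rightarrow> (nat \<Rightarrow> (nat \<Rightarrow> 'a) \<Rightarrow> (nat \<Rightarrow> 'a)) \<Rightarrow> ((nat \<Rightarrow> 'a) \<Rightarrow> 'b) \<Rightarrow> bool" where
  "min_free_res R N b d eps \<longleftrightarrow> is_resolution R N (\<lambda>i. free_on R {..<b i}) d eps
     \<and> minimal_complex R (\<lambda>i. free_on R {..<b i}) d"

definition betti :: "'a ring \<Rightarrow> ('a, 'b) module \<Rightarrow> nat \<Rightarrow> nat" where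
  "betti R N i = (SOME b. \<exists>d eps. min_free_res R N b d eps) i"

definition proj_dim :: "'a ring \<Rightarrow> ('a, 'b) module \<Rightarrow> enat" where
  "proj_dim R N = Inf {enat p | p. \<exists>(b :: nat \<Rightarrow> nat) d eps.
      is_resolution R N (\<lambda>i. free_on R {..<b i}) d eps \<and> (\<forall>i>p. b i = 0)}"

definition sym_gens :: "('a, 'b) module \<Rightarrow> nat \<Rightarrow> 'b multiset set" where
  "sym_gens M j = {X. size X = j \<and> set_mset X \<subseteq> carrier M}"

definition delta :: "'a ring \<Rightarrow> 'c \<Rightarrow> 'c \<Rightarrow> 'a" where
  "delta R x = (\<lambda>y. if y = x then \<one>\<^bsub>R\<^esub> else \<zero>\<^bsub>R\<^esub>)"

definition sym_free :: "'a ring \<Rightarrow> ('a, 'b) module \<Rightarrow> nat \<Rightarrow> ('a, 'b multiset \<Rightarrow> 'a) module" where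
  "sym_free R M j = free_on R (sym_gens M j)"

text \<open>Multilinearity relations (symmetry is built in by using multisets).\<close>
definition sym_rels :: "'a ring \<Rightarrow> ('a, 'b) module \<Rightarrow> nat \<Rightarrow> ('b multiset \<Rightarrow> 'a) set" where
  "sym_rels R M j =
     {delta R (add_mset (x \<oplus>\<^bsub>M\<^esub> y) X) \<ominus>\<^bsub>sym_free R M j\<^esub> delta R (add_mset x X)
        \<ominus>\<^bsub>sym_free R M j\<^esub> delta R (add_mset y X)
       | x y X. x \<in> carrier M \<and> y \<in> carrier M \<and> X \<in> sym_gens M (j - 1) \<and> 0 < j}
   \<union> {delta R (add_mset (r \<odot>\<^bsub>M\<^esub> x) X) \<ominus>\<^bsub>sym_free R M j\<^esub> (r \<odot>\<^bsub>sym_free R M j\<^esub> delta R (add_mset x X))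
       | r x X. r \<in> carrier R \<and> x \<in> carrier M \<and> X \<in> sym_gens M (j - 1) \<and> 0 < j}"

definition sym_pow :: "'a ring \<Rightarrow> ('a, 'b) module \<Rightarrow> nat \<Rightarrow> ('a, ('b multiset \<Rightarrow> 'a) set) module" where
  "sym_pow R M j = quot_mod R (sym_free R M j) (span R (sym_free R M j) (sym_rels R M j))"

text \<open>Action of the matrix phi (phi i s = coefficient of f_i in phi_1(e_s)).\<close>
definition mat_map :: "'a ring \<Rightarrow> (nat \<Rightarrow> nat \<Rightarrow> 'a) \<Rightarrow> nat \<Rightarrow> nat \<Rightarrow> (nat \<Rightarrow> 'a) \<Rightarrow> (nat \<Rightarrow> 'a)" where
  "mat_map R phi n m v = (\<lambda>i. if i < n then finsum R (\<lambda>s. phi i s \<otimes>\<^bsub>R\<^esub> v s) {..<m} else \<zero>\<^bsub>R\<^esub>)"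

text \<open>Basis of D_{j-t} F0 \<otimes> \<Lambda>^t F1: divided power monomials (multisets over the basis of F0)
  of degree j-t paired with t-subsets of the basis of F1.\<close>
definition SB :: "nat \<Rightarrow> nat \<Rightarrow> nat \<Rightarrow> nat \<Rightarrow> (nat multiset \<times> nat set) set" where
  "SB n m j t = {(c, E). t \<le> j \<and> set_mset c \<subseteq> {..<n} \<and> size c = j - t \<and> E \<subseteq> {..<m} \<and> card E = t}"

definition SF :: "'a ring \<Rightarrow> nat \<Rightarrow> nat \<Rightarrow> nat \<Rightarrow> nat \<Rightarrow> ('a, nat multiset \<times> nat set \<Rightarrow> 'a) module" where
  "SF R n m j t = free_on R (SB n m j t)"

definition wsign :: "'a ring \<Rightarrow> nat set \<Rightarrow> nat \<Rightarrow> 'a" where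
  "wsign R E s = (if even (card {e \<in> E. e < s}) then \<one>\<^bsub>R\<^esub> else \<ominus>\<^bsub>R\<^esub> \<one>\<^bsub>R\<^esub>)"

definition Sd :: "'a ring \<Rightarrow> (nat \<Rightarrow> nat \<Rightarrow> 'a) \<Rightarrow> nat \<Rightarrow> nat \<Rightarrow> nat \<Rightarrow> nat
     \<Rightarrow> (nat multiset \<times> nat set \<Rightarrow> 'a) \<Rightarrow> (nat multiset \<times> nat set \<Rightarrow> 'a)" where
  "Sd R phi n m j t v = (\<lambda>y. finsum R (\<lambda>(c, E). finsum R (\<lambda>s. finsum R (\<lambda>i.
        if (add_mset i c, E - {s}) = y
        then wsign R E s \<otimes>\<^bsub>R\<^esub> phi i s \<otimes>\<^bsub>R\<^esub> v (c, E) else \<zero>\<^bsub>R\<^esub>) {..<n}) E) (SB n m j t))"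

definition SW :: "'a ring \<Rightarrow> ('a, 'b) module \<Rightarrow> nat \<Rightarrow> bool" where
  "SW R M j \<longleftrightarrow> (\<exists>n m phi eps.
      min_free_res R M (\<lambda>i. if i = 0 then n else if i = 1 then m else 0)
        (\<lambda>i. if i = 1 then mat_map R phi n m else (\<lambda>v k. \<zero>\<^bsub>R\<^esub>)) eps
      \<and> (\<forall>i<n. \<forall>s<m. phi i s \<in> carrier R)
      \<and> (\<exists>eps'. is_resolution R (sym_pow R M j) (\<lambda>t. SF R n m j t) (\<lambda>t. Sd R phi n m j t) eps'))"

end

(* By (SW_j), the complex S_j F built from a minimal resolution 0 -> R^m --phi--> R^n of M
   resolves S_j(M); its t-th module D_{j-t} F_0 (x) Lambda^t F_1 is free of rank
   binom(n+j-t-1, j-t) binom(m, t), which is at least binom(m, t) because n > 0 (as pd M = 1).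
   Minimality of F puts the entries of phi into the maximal ideal, hence also those of the
   differential of S_j F, so S_j F is a minimal resolution and vanishes beyond degree j.
   Betti numbers are the ranks of any minimal resolution: comparison maps alpha, beta between a
   minimal and an arbitrary free resolution satisfy beta alpha = id modulo the maximal ideal, and
   over a local ring a matrix with a left inverse modulo the maximal ideal has no more columns than
   rows. Hence beta_1(M) = m >= d and beta_t(S_j M) >= binom(m, t) >= binom(d, t). *)

theory Submission
  imports Defs
begin

section \<open>Local rings\<close>

lemma local_ring_cring: "local_ring R \<Longrightarrow> cring R"
  by (simp add: local_ring_def)

lemma max_ideal_maximal: "local_ring R \<Longrightarrow> maximalideal (max_ideal R) R"
  unfolding local_ring_def max_ideal_def by (metis theI')

lemma max_ideal_unique: "local_ring R \<Longrightarrow> maximalideal I R \<Longrightarrow> I = max_ideal R"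
  unfolding local_ring_def max_ideal_def by (metis the1_equality)

lemma max_ideal_ideal: "local_ring R \<Longrightarrow> ideal (max_ideal R) R"
  using max_ideal_maximal by (auto simp: maximalideal_def)

lemma one_not_in_max_ideal: "local_ring R \<Longrightarrow> \<one>\<^bsub>R\<^esub> \<notin> max_ideal R"
  by (metis ideal.one_imp_carrier max_ideal_ideal max_ideal_maximal maximalideal.I_notcarr)

lemma ideal_minus: "ideal I R \<Longrightarrow> a \<in> I \<Longrightarrow> b \<in> I \<Longrightarrow> a \<ominus>\<^bsub>R\<^esub> b \<in> I"
  unfolding a_minus_def
  by (simp add: additive_subgroup.a_closed additive_subgroup.a_inv_closed ideal.axioms(1))

lemma ideal_finsum:
  assumes "ring R" "ideal I R" "finite A" "\<forall>a\<in>A. f a \<in> I"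
  shows "finsum R f A \<in> I"
  using assms(3,4)
proof (induction A rule: finite_induct)
  case empty
  interpret ring R by fact
  show ?case using assms(2) by (simp add: additive_subgroup.zero_closed ideal.axioms(1))
next
  case (insert x F)
  interpret ring R by fact
  have "I \<subseteq> carrier R" using assms(2) by (simp add: additive_subgroup.a_subset ideal.axioms(1))
  then have "finsum R f (insert x F) = f x \<oplus>\<^bsub>R\<^esub> finsum R f F"
    using insert by (intro finsum_insert) auto
  then show ?case using insert assms(2) by (simp add: additive_subgroup.a_closed ideal.axioms(1))
qed

lemma (in cring) nonunit_in_maximalideal:
  assumes "noetherian_ring R" and a: "a \<in> carrier R" "a \<notin> Units R"
  shows "\<exists>I. maximalideal I R \<and> a \<in> I"
proof -
  interpret noetherian_ring R by fact
  define A where "A = {I. ideal I R \<and> PIdl a \<subseteq> I \<and> \<one> \<notin> I}"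
  have "\<one> \<notin> PIdl a"
  proof
    assume "\<one> \<in> PIdl a"
    then obtain x where "x \<in> carrier R" "\<one> = x \<otimes> a" unfolding cgenideal_def by auto
    then show False using a m_comm unfolding Units_def by auto
  qed
  then have "A \<noteq> {}" using cgenideal_ideal[OF a(1)] unfolding A_def by auto
  moreover have "\<Union>C \<in> A" if "C \<noteq> {}" "subset.chain A C" for C
  proof -
    have "subset.chain {I. ideal I R} C" using that(2) unfolding A_def pred_on.chain_def by auto
    then have "\<Union>C \<in> C" using ideal_chain_is_trivial that(1) by blast
    then show ?thesis using that(2) unfolding pred_on.chain_def by auto
  qed
  ultimately obtain M where M: "M \<in> A" "\<forall>X\<in>A. M \<subseteq> X \<longrightarrow> X = M"
    using subset_Zorn_nonempty[of A] by blast
  have "maximalideal M R"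
  proof (rule maximalidealI)
    show "ideal M R" "carrier R \<noteq> M" using M unfolding A_def by auto
    fix K assume K: "ideal K R" "M \<subseteq> K" "K \<subseteq> carrier R"
    show "K = M \<or> K = carrier R"
    proof (cases "\<one> \<in> K")
      case False
      then have "K \<in> A" using K M unfolding A_def by auto
      then show ?thesis using M K by auto
    qed (use ideal.one_imp_carrier[OF K(1)] in simp)
  qed
  moreover have "a \<in> M" using M cgenideal_self[OF a(1)] unfolding A_def by auto
  ultimately show ?thesis by blast
qed

lemma local_ring_Units:
  assumes L: "local_ring R" and "a \<in> carrier R" "a \<notin> max_ideal R"
  shows "a \<in> Units R"
proof (rule ccontr)
  assume "a \<notin> Units R"
  then obtain I where "maximalideal I R" "a \<in> I"
    using cring.nonunit_in_maximalideal[of R a] assms unfolding local_ring_def by blast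
  then show False using max_ideal_unique[OF L] assms(3) by blast
qed

section \<open>Matrices that are invertible modulo the maximal ideal\<close>

definition left_inverse_mod_max_ideal ::
    "'a ring \<Rightarrow> 'i set \<Rightarrow> 'j set \<Rightarrow> ('j \<Rightarrow> 'i \<Rightarrow> 'a) \<Rightarrow> ('i \<Rightarrow> 'j \<Rightarrow> 'a) \<Rightarrow> bool" where
  "left_inverse_mod_max_ideal R I J B A \<longleftrightarrow> (\<forall>i\<in>J. \<forall>j\<in>J.
     (\<Oplus>\<^bsub>R\<^esub>r\<in>I. B i r \<otimes>\<^bsub>R\<^esub> A r j) \<ominus>\<^bsub>R\<^esub> (if i = j then \<one>\<^bsub>R\<^esub> else \<zero>\<^bsub>R\<^esub>) \<in> max_ideal R)"

lemma left_inverse_mod_max_ideal_pivot: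
  fixes R (structure)
  assumes L: "local_ring R" and I: "finite I"
    and A: "\<forall>r\<in>I. \<forall>j\<in>J. A r j \<in> carrier R" and B: "\<forall>i\<in>J. \<forall>r\<in>I. B i r \<in> carrier R"
    and BA: "left_inverse_mod_max_ideal R I J B A" and j0: "j0 \<in> J"
  shows "\<exists>k\<in>I. A k j0 \<in> Units R"
proof -
  interpret cring R using L by (rule local_ring_cring)
  have m: "ideal (max_ideal R) R" using max_ideal_ideal[OF L] .
  define s where "s = (\<Oplus>r\<in>I. B j0 r \<otimes> A r j0)"
  have s: "s \<in> carrier R" unfolding s_def using A B j0 by (intro finsum_closed) auto
  have s1: "s \<ominus> \<one> \<in> max_ideal R"
    using bspec[OF bspec[OF BA[unfolded left_inverse_mod_max_ideal_def] j0] j0]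
    unfolding s_def by simp
  have "s \<notin> max_ideal R"
  proof
    assume "s \<in> max_ideal R"
    then have "s \<ominus> (s \<ominus> \<one>) \<in> max_ideal R" using ideal_minus[OF m] s1 by blast
    moreover have "s \<ominus> (s \<ominus> \<one>) = \<one>" using s by algebra
    ultimately show False using one_not_in_max_ideal[OF L] by simp
  qed
  then obtain k where k: "k \<in> I" "B j0 k \<otimes> A k j0 \<notin> max_ideal R"
    using ideal_finsum[OF ring_axioms m I, of "\<lambda>r. B j0 r \<otimes> A r j0"] unfolding s_def by blast
  moreover have "A k j0 \<notin> max_ideal R"
  proof
    assume "A k j0 \<in> max_ideal R"
    then have "B j0 k \<otimes> A k j0 \<in> max_ideal R" using ideal.I_l_closed[OF m] B j0 k(1) by blast
    then show False using k(2) by simp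
  qed
  ultimately show ?thesis using local_ring_Units[OF L] A j0 by blast
qed

lemma (in cring) finsum_column_operation:
  assumes I: "finite I" "k \<in> I" and carr: "b \<in> I \<rightarrow> carrier R" "x \<in> I \<rightarrow> carrier R" "y \<in> I \<rightarrow> carrier R"
    and unit: "y k \<in> Units R"
  shows "(\<Oplus>r\<in>I - {k}. b r \<otimes> (x r \<ominus> y r \<otimes> inv (y k) \<otimes> x k))
       = (\<Oplus>r\<in>I. b r \<otimes> x r) \<ominus> (\<Oplus>r\<in>I. b r \<otimes> y r) \<otimes> (inv (y k) \<otimes> x k)"
proof -
  define c where "c = inv (y k) \<otimes> x k"
  define t where "t r = b r \<otimes> (x r \<ominus> y r \<otimes> inv (y k) \<otimes> x k)" for r
  have c: "c \<in> carrier R" using unit carr I unfolding c_def by auto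
  have t: "t r = b r \<otimes> x r \<oplus> (b r \<otimes> y r) \<otimes> \<ominus> c" "t r \<in> carrier R" if "r \<in> I" for r
  proof -
    have vals: "b r \<in> carrier R" "x r \<in> carrier R" "y r \<in> carrier R" "x k \<in> carrier R"
      "inv (y k) \<in> carrier R"
      using carr unit that I by auto
    show "t r = b r \<otimes> x r \<oplus> (b r \<otimes> y r) \<otimes> \<ominus> c" using vals unfolding t_def c_def by algebra
    show "t r \<in> carrier R" using vals unfolding t_def by simp
  qed
  have prods: "(\<lambda>r. b r \<otimes> x r) \<in> I \<rightarrow> carrier R" "(\<lambda>r. b r \<otimes> y r) \<in> I \<rightarrow> carrier R"
    "(\<lambda>r. (b r \<otimes> y r) \<otimes> \<ominus> c) \<in> I \<rightarrow> carrier R"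
    using carr c by (auto simp: Pi_iff)
  have "t k = \<zero>"
  proof -
    have "b k \<in> carrier R" "x k \<in> carrier R" using carr I by auto
    then show ?thesis unfolding t_def using unit by (simp add: a_minus_def r_neg)
  qed
  have "(\<Oplus>r\<in>I - {k}. t r) = t k \<oplus> (\<Oplus>r\<in>I - {k}. t r)"
    using \<open>t k = \<zero>\<close> t I by (simp add: finsum_closed)
  also have "\<dots> = (\<Oplus>r\<in>insert k (I - {k}). t r)"
    using t I by (intro finsum_insert[symmetric]) auto
  also have "\<dots> = (\<Oplus>r\<in>I. b r \<otimes> x r \<oplus> (b r \<otimes> y r) \<otimes> \<ominus> c)"
    using t I carr c by (auto simp: insert_absorb intro: finsum_cong')
  also have "\<dots> = (\<Oplus>r\<in>I. b r \<otimes> x r) \<oplus> (\<Oplus>r\<in>I. b r \<otimes> y r) \<otimes> \<ominus> c"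
    using prods c I by (simp add: finsum_addf finsum_ldistr)
  finally show ?thesis
    unfolding t_def using prods c by (simp add: c_def[symmetric] a_minus_def r_minus)
qed

lemma left_inverse_mod_max_ideal_eliminate:
  fixes R (structure)
  assumes L: "local_ring R" and I: "finite I"
    and A: "\<forall>r\<in>I. \<forall>j\<in>J. A r j \<in> carrier R" and B: "\<forall>i\<in>J. \<forall>r\<in>I. B i r \<in> carrier R"
    and BA: "left_inverse_mod_max_ideal R I J B A"
    and j0: "j0 \<in> J" and k: "k \<in> I" and unit: "A k j0 \<in> Units R"
  shows "left_inverse_mod_max_ideal R (I - {k}) (J - {j0}) B
           (\<lambda>r j. A r j \<ominus> A r j0 \<otimes> inv (A k j0) \<otimes> A k j)"
  unfolding left_inverse_mod_max_ideal_def
proof (intro ballI)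
  interpret cring R using L by (rule local_ring_cring)
  have m: "ideal (max_ideal R) R" using max_ideal_ideal[OF L] .
  fix i j assume "i \<in> J - {j0}" "j \<in> J - {j0}"
  then have i: "i \<in> J" "i \<noteq> j0" and j: "j \<in> J" by auto
  define S where "S jj = (\<Oplus>r\<in>I. B i r \<otimes> A r jj)" for jj
  define c where "c = inv (A k j0) \<otimes> A k j"
  define \<delta> where "\<delta> = (if i = j then \<one> else \<zero>)"
  have carr: "S j \<in> carrier R" "S j0 \<in> carrier R" "c \<in> carrier R" "\<delta> \<in> carrier R"
    using A B i j j0 k unit unfolding S_def c_def \<delta>_def by (auto intro: finsum_closed)
  have "(\<Oplus>r\<in>I - {k}. B i r \<otimes> (A r j \<ominus> A r j0 \<otimes> inv (A k j0) \<otimes> A k j)) = S j \<ominus> S j0 \<otimes> c"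
    unfolding S_def c_def
    by (rule finsum_column_operation[where b = "B i" and x = "\<lambda>r. A r j" and y = "\<lambda>r. A r j0", OF I k])
      (use A B i j j0 k unit in auto)
  moreover have "S j \<ominus> S j0 \<otimes> c \<ominus> \<delta> = (S j \<ominus> \<delta>) \<oplus> (S j0 \<ominus> \<zero>) \<otimes> \<ominus> c"
    using carr by algebra
  moreover have S_mod: "S jj \<ominus> (if i = jj then \<one> else \<zero>) \<in> max_ideal R" if "jj \<in> J" for jj
    using BA i(1) that unfolding left_inverse_mod_max_ideal_def S_def by blast
  have "S j \<ominus> \<delta> \<in> max_ideal R" "S j0 \<ominus> \<zero> \<in> max_ideal R"
    using S_mod[OF j] S_mod[OF j0] i(2) unfolding \<delta>_def by auto
  then have "(S j \<ominus> \<delta>) \<oplus> (S j0 \<ominus> \<zero>) \<otimes> \<ominus> c \<in> max_ideal R"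
    using m carr by (simp add: additive_subgroup.a_closed ideal.axioms(1) ideal.I_r_closed)
  ultimately show "(\<Oplus>r\<in>I - {k}. B i r \<otimes> (A r j \<ominus> A r j0 \<otimes> inv (A k j0) \<otimes> A k j))
      \<ominus> (if i = j then \<one> else \<zero>) \<in> max_ideal R"
    unfolding \<delta>_def by simp
qed

lemma card_le_if_left_inverse_mod_max_ideal:
  fixes R (structure)
  assumes L: "local_ring R" and "finite J" "finite I"
    and "\<forall>r\<in>I. \<forall>j\<in>J. A r j \<in> carrier R" "\<forall>i\<in>J. \<forall>r\<in>I. B i r \<in> carrier R"
    and "left_inverse_mod_max_ideal R I J B A"
  shows "card J \<le> card I"
  using assms(2-6)
proof (induction "card J" arbitrary: J I A)
  case (Suc n)
  interpret cring R using L by (rule local_ring_cring)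
  obtain j0 where j0: "j0 \<in> J" using Suc.hyps(2) by fastforce
  obtain k where k: "k \<in> I" "A k j0 \<in> Units R"
    using left_inverse_mod_max_ideal_pivot[OF L Suc.prems(2-5) j0] by blast
  have n: "n = card (J - {j0})" using Suc.hyps(2) j0 by simp
  have "card (J - {j0}) \<le> card (I - {k})"
  proof (rule Suc.hyps(1)[OF n])
    show "\<forall>r\<in>I - {k}. \<forall>j\<in>J - {j0}. A r j \<ominus> A r j0 \<otimes> inv (A k j0) \<otimes> A k j \<in> carrier R"
      using Suc.prems(3) k j0 by auto
    show "left_inverse_mod_max_ideal R (I - {k}) (J - {j0}) B
           (\<lambda>r j. A r j \<ominus> A r j0 \<otimes> inv (A k j0) \<otimes> A k j)"
      by (rule left_inverse_mod_max_ideal_eliminate[OF L Suc.prems(2-5) j0 k])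
  qed (use Suc.prems in auto)
  moreover have "card (I - {k}) = card I - 1" "card I \<ge> 1"
    using k(1) Suc.prems(2) by (auto simp: Suc_le_eq card_gt_0_iff)
  ultimately show ?case using Suc.hyps(2) n by linarith
qed simp

lemma (in abelian_group) add_minus_minus_cancel:
  "x \<in> carrier G \<Longrightarrow> y \<in> carrier G \<Longrightarrow> (x \<oplus> y) \<ominus> x \<ominus> y = \<zero>"
  using a_lcomm[of y "\<ominus> x" "\<ominus> y"] by (simp add: a_minus_def minus_add a_assoc r_neg r_neg2)

lemma (in abelian_group) add_minus_cancel_left: "x \<in> carrier G \<Longrightarrow> y \<in> carrier G \<Longrightarrow> x \<oplus> (y \<ominus> x) = y"
  using a_comm[of y "\<ominus> x"] r_neg2[of x y] by (simp add: a_minus_def)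

lemma (in abelian_group) minus_add_cancel: "x \<in> carrier G \<Longrightarrow> y \<in> carrier G \<Longrightarrow> (x \<ominus> y) \<oplus> y = x"
  by (simp add: a_minus_def a_ac r_neg)

lemma lin_map_closed: "lin_map R M N f \<Longrightarrow> x \<in> carrier M \<Longrightarrow> f x \<in> carrier N"
  unfolding lin_map_def by auto

lemma lin_map_add: "lin_map R M N f \<Longrightarrow> x \<in> carrier M \<Longrightarrow> y \<in> carrier M \<Longrightarrow> f (x \<oplus>\<^bsub>M\<^esub> y) = f x \<oplus>\<^bsub>N\<^esub> f y"
  unfolding lin_map_def by auto

lemma lin_map_smult: "lin_map R M N f \<Longrightarrow> r \<in> carrier R \<Longrightarrow> x \<in> carrier M \<Longrightarrow> f (r \<odot>\<^bsub>M\<^esub> x) = r \<odot>\<^bsub>N\<^esub> f x"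
  unfolding lin_map_def by auto

lemma lin_map_zero:
  assumes "module R M" "module R N" "lin_map R M N f"
  shows "f \<zero>\<^bsub>M\<^esub> = \<zero>\<^bsub>N\<^esub>"
proof -
  interpret M: module R M by fact
  interpret N: module R N by fact
  have "f \<zero>\<^bsub>M\<^esub> = f (\<zero>\<^bsub>R\<^esub> \<odot>\<^bsub>M\<^esub> \<zero>\<^bsub>M\<^esub>)" by simp
  also have "\<dots> = \<zero>\<^bsub>R\<^esub> \<odot>\<^bsub>N\<^esub> f \<zero>\<^bsub>M\<^esub>" by (rule lin_map_smult[OF assms(3)]) simp_all
  also have "\<dots> = \<zero>\<^bsub>N\<^esub>" using assms(3) lin_map_closed by (simp add: lin_map_closed)
  finally show ?thesis .
qed

lemma lin_map_neg:
  assumes "module R M" "module R N" "lin_map R M N f" "x \<in> carrier M"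
  shows "f (\<ominus>\<^bsub>M\<^esub> x) = \<ominus>\<^bsub>N\<^esub> f x"
proof -
  interpret M: module R M by fact
  interpret N: module R N by fact
  have "f (\<ominus>\<^bsub>M\<^esub> x) = f ((\<ominus>\<^bsub>R\<^esub> \<one>\<^bsub>R\<^esub>) \<odot>\<^bsub>M\<^esub> x)" using assms(4) by (simp add: M.smult_l_minus)
  also have "\<dots> = (\<ominus>\<^bsub>R\<^esub> \<one>\<^bsub>R\<^esub>) \<odot>\<^bsub>N\<^esub> f x" by (rule lin_map_smult[OF assms(3)]) (simp_all add: assms(4))
  also have "\<dots> = \<ominus>\<^bsub>N\<^esub> f x" using assms(3,4) by (simp add: lin_map_closed N.smult_l_minus)
  finally show ?thesis .
qed

lemma lin_map_minus:
  assumes "module R M" "module R N" "lin_map R M N f" "x \<in> carrier M" "y \<in> carrier M"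
  shows "f (x \<ominus>\<^bsub>M\<^esub> y) = f x \<ominus>\<^bsub>N\<^esub> f y"
proof -
  interpret M: module R M by fact
  show ?thesis unfolding a_minus_def using assms
    by (simp add: lin_map_add lin_map_neg)
qed

lemma lin_map_finsum:
  assumes "module R M" "module R N" "lin_map R M N f" "finite A" "g \<in> A \<rightarrow> carrier M"
  shows "f (finsum M g A) = finsum N (\<lambda>a. f (g a)) A"
  using assms(4,5)
proof (induction A rule: finite_induct)
  case empty
  interpret M: module R M by fact
  interpret N: module R N by fact
  show ?case using lin_map_zero[OF assms(1-3)] by simp
next
  case (insert x F)
  interpret M: module R M by fact
  interpret N: module R N by fact
  have c: "\<And>a. a \<in> insert x F \<Longrightarrow> f (g a) \<in> carrier N" by (rule lin_map_closed[OF assms(3)]) (use insert(4) in auto)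
  have gc: "g \<in> F \<rightarrow> carrier M" "g x \<in> carrier M" using insert(4) by auto
  have e1: "finsum M g (insert x F) = g x \<oplus>\<^bsub>M\<^esub> finsum M g F"
    by (rule M.finsum_insert) (use insert gc in auto)
  have e2: "finsum N (\<lambda>a. f (g a)) (insert x F) = f (g x) \<oplus>\<^bsub>N\<^esub> finsum N (\<lambda>a. f (g a)) F"
    by (rule N.finsum_insert) (use insert c in auto)
  have e3: "f (g x \<oplus>\<^bsub>M\<^esub> finsum M g F) = f (g x) \<oplus>\<^bsub>N\<^esub> f (finsum M g F)"
    by (rule lin_map_add[OF assms(3)]) (use gc M.finsum_closed in auto)
  show ?case unfolding e1 e2 e3 using insert(3) gc by simp
qed

lemma lin_map_comp: "lin_map R M N f \<Longrightarrow> lin_map R N P g \<Longrightarrow> lin_map R M P (\<lambda>x. g (f x))"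
  unfolding lin_map_def by (auto simp: Pi_def)

lemma lin_map_id: "lin_map R M M (\<lambda>x. x)"
  unfolding lin_map_def by auto

lemma lin_map_zero_map:
  assumes "module R N"
  shows "lin_map R M N (\<lambda>x. \<zero>\<^bsub>N\<^esub>)"
proof -
  interpret N: module R N by fact
  show ?thesis unfolding lin_map_def by simp
qed

lemma lin_map_diff:
  assumes "module R M" "module R N" "lin_map R M N f" "lin_map R M N g"
  shows "lin_map R M N (\<lambda>x. f x \<ominus>\<^bsub>N\<^esub> g x)"
proof -
  interpret M: module R M by fact
  interpret N: module R N by fact
  have fc: "\<And>x. x \<in> carrier M \<Longrightarrow> f x \<in> carrier N" and gc: "\<And>x. x \<in> carrier M \<Longrightarrow> g x \<in> carrier N"
    using lin_map_closed[OF assms(3)] lin_map_closed[OF assms(4)] by auto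
  show ?thesis unfolding lin_map_def
  proof (intro conjI ballI)
    show "(\<lambda>x. f x \<ominus>\<^bsub>N\<^esub> g x) \<in> carrier M \<rightarrow> carrier N" using fc gc by auto
  next
    fix x y assume x: "x \<in> carrier M" and y: "y \<in> carrier M"
    have "f (x \<oplus>\<^bsub>M\<^esub> y) \<ominus>\<^bsub>N\<^esub> g (x \<oplus>\<^bsub>M\<^esub> y) = (f x \<oplus>\<^bsub>N\<^esub> f y) \<ominus>\<^bsub>N\<^esub> (g x \<oplus>\<^bsub>N\<^esub> g y)"
      using assms x y by (simp add: lin_map_add)
    also have "\<dots> = (f x \<ominus>\<^bsub>N\<^esub> g x) \<oplus>\<^bsub>N\<^esub> (f y \<ominus>\<^bsub>N\<^esub> g y)"
      using fc[OF x] fc[OF y] gc[OF x] gc[OF y]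
      by (simp add: a_minus_def N.minus_add N.a_ac)
    finally show "f (x \<oplus>\<^bsub>M\<^esub> y) \<ominus>\<^bsub>N\<^esub> g (x \<oplus>\<^bsub>M\<^esub> y) = (f x \<ominus>\<^bsub>N\<^esub> g x) \<oplus>\<^bsub>N\<^esub> (f y \<ominus>\<^bsub>N\<^esub> g y)" .
  next
    fix r x assume r: "r \<in> carrier R" and x: "x \<in> carrier M"
    have "f (r \<odot>\<^bsub>M\<^esub> x) \<ominus>\<^bsub>N\<^esub> g (r \<odot>\<^bsub>M\<^esub> x) = r \<odot>\<^bsub>N\<^esub> f x \<ominus>\<^bsub>N\<^esub> r \<odot>\<^bsub>N\<^esub> g x"
      using assms r x by (simp add: lin_map_smult)
    also have "\<dots> = r \<odot>\<^bsub>N\<^esub> (f x \<ominus>\<^bsub>N\<^esub> g x)"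
      using fc[OF x] gc[OF x] r by (simp add: a_minus_def N.smult_r_distr N.smult_r_minus)
    finally show "f (r \<odot>\<^bsub>M\<^esub> x) \<ominus>\<^bsub>N\<^esub> g (r \<odot>\<^bsub>M\<^esub> x) = r \<odot>\<^bsub>N\<^esub> (f x \<ominus>\<^bsub>N\<^esub> g x)" .
  qed
qed

lemma free_on_carrier: "v \<in> carrier (free_on R B) \<longleftrightarrow>
   (\<forall>x\<in>B. v x \<in> carrier R) \<and> (\<forall>x. x \<notin> B \<longrightarrow> v x = \<zero>\<^bsub>R\<^esub>) \<and> finite {x. v x \<noteq> \<zero>\<^bsub>R\<^esub>}"
  by (simp add: free_on_def)

lemma free_on_zero: "\<zero>\<^bsub>free_on R B\<^esub> = (\<lambda>x. \<zero>\<^bsub>R\<^esub>)"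
  by (simp add: free_on_def)

lemma free_on_add: "v \<oplus>\<^bsub>free_on R B\<^esub> w = (\<lambda>x. v x \<oplus>\<^bsub>R\<^esub> w x)"
  by (simp add: free_on_def)

lemma free_on_smult: "r \<odot>\<^bsub>free_on R B\<^esub> v = (\<lambda>x. r \<otimes>\<^bsub>R\<^esub> v x)"
  by (simp add: free_on_def)

lemma free_on_val: "ring R \<Longrightarrow> v \<in> carrier (free_on R B) \<Longrightarrow> v a \<in> carrier R"
  unfolding free_on_carrier by (cases "a \<in> B") (auto simp: ring.ring_simprules(2))

lemma free_on_abelian_group:
  fixes R (structure)
  assumes "ring R"
  shows "abelian_group (free_on R B)"
proof -
  interpret ring R by fact
  let ?F = "free_on R B"
  show ?thesis
  proof (rule abelian_groupI)
    fix x y assume x: "x \<in> carrier ?F" and y: "y \<in> carrier ?F"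
    have "{a. x a \<oplus> y a \<noteq> \<zero>} \<subseteq> {a. x a \<noteq> \<zero>} \<union> {a. y a \<noteq> \<zero>}" by auto
    then show "x \<oplus>\<^bsub>?F\<^esub> y \<in> carrier ?F" using x y
      unfolding free_on_carrier free_on_add by (auto intro: finite_subset)
    show "x \<oplus>\<^bsub>?F\<^esub> y = y \<oplus>\<^bsub>?F\<^esub> x" using free_on_val[OF ring_axioms x] free_on_val[OF ring_axioms y]
      unfolding free_on_add by (auto simp: a_comm)
  next
    show "\<zero>\<^bsub>?F\<^esub> \<in> carrier ?F" unfolding free_on_carrier free_on_zero by simp
  next
    fix x y z assume x: "x \<in> carrier ?F" and y: "y \<in> carrier ?F" and z: "z \<in> carrier ?F"
    show "x \<oplus>\<^bsub>?F\<^esub> y \<oplus>\<^bsub>?F\<^esub> z = x \<oplus>\<^bsub>?F\<^esub> (y \<oplus>\<^bsub>?F\<^esub> z)"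
      using free_on_val[OF ring_axioms x] free_on_val[OF ring_axioms y] free_on_val[OF ring_axioms z]
      unfolding free_on_add by (auto simp: a_assoc)
  next
    fix x assume x: "x \<in> carrier ?F"
    show "\<zero>\<^bsub>?F\<^esub> \<oplus>\<^bsub>?F\<^esub> x = x" using free_on_val[OF ring_axioms x]
      unfolding free_on_add free_on_zero by auto
    let ?y = "\<lambda>a. \<ominus> x a"
    have "{a. \<ominus> x a \<noteq> \<zero>} \<subseteq> {a. x a \<noteq> \<zero>}" using x unfolding free_on_carrier
      by auto
    then have "?y \<in> carrier ?F" using x unfolding free_on_carrier by (auto intro: finite_subset)
    moreover have "?y \<oplus>\<^bsub>?F\<^esub> x = \<zero>\<^bsub>?F\<^esub>" using free_on_val[OF ring_axioms x]
      unfolding free_on_add free_on_zero by (auto simp: l_neg)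
    ultimately show "\<exists>y\<in>carrier ?F. y \<oplus>\<^bsub>?F\<^esub> x = \<zero>\<^bsub>?F\<^esub>" by blast
  qed
qed

lemma free_on_module:
  fixes R (structure)
  assumes "cring R"
  shows "module R (free_on R B)"
proof -
  interpret cring R by fact
  let ?F = "free_on R B"
  show ?thesis
  proof (rule moduleI[OF assms free_on_abelian_group[OF ring_axioms]])
    fix a x assume a: "a \<in> carrier R" and x: "x \<in> carrier ?F"
    have "{b. a \<otimes> x b \<noteq> \<zero>} \<subseteq> {b. x b \<noteq> \<zero>}" using x a unfolding free_on_carrier by auto
    then show "a \<odot>\<^bsub>?F\<^esub> x \<in> carrier ?F" using a x unfolding free_on_carrier free_on_smult
      by (auto intro: finite_subset)
  next
    fix a b x assume "a \<in> carrier R" "b \<in> carrier R" and x: "x \<in> carrier ?F"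
    then show "(a \<oplus> b) \<odot>\<^bsub>?F\<^esub> x = a \<odot>\<^bsub>?F\<^esub> x \<oplus>\<^bsub>?F\<^esub> b \<odot>\<^bsub>?F\<^esub> x"
      using free_on_val[OF ring_axioms x] unfolding free_on_smult free_on_add
      by (auto simp: l_distr)
  next
    fix a x y assume "a \<in> carrier R" and x: "x \<in> carrier ?F" and y: "y \<in> carrier ?F"
    then show "a \<odot>\<^bsub>?F\<^esub> (x \<oplus>\<^bsub>?F\<^esub> y) = a \<odot>\<^bsub>?F\<^esub> x \<oplus>\<^bsub>?F\<^esub> a \<odot>\<^bsub>?F\<^esub> y"
      using free_on_val[OF ring_axioms x] free_on_val[OF ring_axioms y] unfolding free_on_smult free_on_add
      by (auto simp: r_distr)
  next
    fix a b x assume "a \<in> carrier R" "b \<in> carrier R" and x: "x \<in> carrier ?F"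
    then show "(a \<otimes> b) \<odot>\<^bsub>?F\<^esub> x = a \<odot>\<^bsub>?F\<^esub> (b \<odot>\<^bsub>?F\<^esub> x)"
      using free_on_val[OF ring_axioms x] unfolding free_on_smult
      by (auto simp: m_assoc)
  next
    fix x assume x: "x \<in> carrier ?F"
    then show "\<one> \<odot>\<^bsub>?F\<^esub> x = x"
      using free_on_val[OF ring_axioms x] unfolding free_on_smult
      by auto
  qed
qed

lemma free_on_neg:
  fixes R (structure)
  assumes "cring R" "v \<in> carrier (free_on R B)"
  shows "\<ominus>\<^bsub>free_on R B\<^esub> v = (\<lambda>x. \<ominus> v x)"
proof -
  interpret cring R by fact
  interpret F: module R "free_on R B" using free_on_module[OF assms(1)] .
  have vv: "\<And>a. v a \<in> carrier R" using free_on_val[OF ring_axioms assms(2)] .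
  have "{a. \<ominus> v a \<noteq> \<zero>} \<subseteq> {a. v a \<noteq> \<zero>}" by auto
  then have yc: "(\<lambda>x. \<ominus> v x) \<in> carrier (free_on R B)" using assms(2) unfolding free_on_carrier
    by (auto intro: finite_subset)
  have "(\<lambda>x. \<ominus> v x) \<oplus>\<^bsub>free_on R B\<^esub> v = \<zero>\<^bsub>free_on R B\<^esub>"
    unfolding free_on_add free_on_zero using vv by (auto simp: l_neg)
  then show ?thesis by (rule F.minus_equality[OF _ assms(2) yc])
qed

lemma free_on_minus:
  fixes R (structure)
  assumes "cring R" "v \<in> carrier (free_on R B)" "w \<in> carrier (free_on R B)"
  shows "v \<ominus>\<^bsub>free_on R B\<^esub> w = (\<lambda>x. v x \<ominus> w x)"
  unfolding a_minus_def free_on_neg[OF assms(1,3)] free_on_add ..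

lemma free_on_finsum_apply:
  fixes R (structure)
  assumes "cring R" "finite A" "f \<in> A \<rightarrow> carrier (free_on R B)"
  shows "finsum (free_on R B) f A x = (\<Oplus>a\<in>A. f a x)"
  using assms(2,3)
proof (induction A rule: finite_induct)
  case empty
  interpret cring R by fact
  interpret F: module R "free_on R B" using free_on_module[OF assms(1)] .
  show ?case by (simp add: free_on_zero)
next
  case (insert y A)
  interpret cring R by fact
  interpret F: module R "free_on R B" using free_on_module[OF assms(1)] .
  have fc: "f \<in> A \<rightarrow> carrier (free_on R B)" "f y \<in> carrier (free_on R B)" using insert(4) by auto
  have "finsum (free_on R B) f (insert y A) = f y \<oplus>\<^bsub>free_on R B\<^esub> finsum (free_on R B) f A"
    by (rule F.finsum_insert) (use insert fc in auto)
  then have "finsum (free_on R B) f (insert y A) x = f y x \<oplus> (\<Oplus>a\<in>A. f a x)"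
    using insert(3)[OF fc(1)] by (simp add: free_on_add)
  also have "\<dots> = (\<Oplus>a\<in>insert y A. f a x)"
  proof -
    have fx: "\<And>a. a \<in> insert y A \<Longrightarrow> f a x \<in> carrier R"
      by (rule free_on_val[OF ring_axioms]) (use insert(4) in auto)
    show ?thesis by (rule finsum_insert[symmetric]) (use fx insert(1,2) in auto)
  qed
  finally show ?case .
qed

lemma delta_carrier:
  "ring R \<Longrightarrow> b \<in> B \<Longrightarrow> delta R b \<in> carrier (free_on R B)"
  unfolding free_on_carrier delta_def
  by (auto simp: ring.ring_simprules(6) ring.ring_simprules(2) intro: finite_subset[of _ "{b}"])

lemma free_on_expand:
  fixes R (structure)
  assumes "cring R" "finite B" "v \<in> carrier (free_on R B)"
  shows "v = finsum (free_on R B) (\<lambda>b. v b \<odot>\<^bsub>free_on R B\<^esub> delta R b) B"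
proof -
  interpret cring R by fact
  interpret F: module R "free_on R B" using free_on_module[OF assms(1)] .
  have vv: "\<And>a. v a \<in> carrier R" using free_on_val[OF ring_axioms assms(3)] .
  have tc: "(\<lambda>b. v b \<odot>\<^bsub>free_on R B\<^esub> delta R b) \<in> B \<rightarrow> carrier (free_on R B)"
    by (auto intro!: F.smult_closed delta_carrier[OF ring_axioms] vv)
  show ?thesis
  proof (rule ext)
    fix x
    have "finsum (free_on R B) (\<lambda>b. v b \<odot>\<^bsub>free_on R B\<^esub> delta R b) B x
        = (\<Oplus>b\<in>B. v b \<otimes> delta R b x)"
      using free_on_finsum_apply[OF assms(1,2) tc] by (simp add: free_on_smult)
    also have "\<dots> = (\<Oplus>b\<in>B. if x = b then v b else \<zero>)"
      by (rule finsum_cong') (auto simp: delta_def vv)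
    also have "\<dots> = v x"
    proof (cases "x \<in> B")
      case True
      then show ?thesis using finsum_singleton[OF True assms(2), of v] vv by auto
    next
      case False
      then have "(\<Oplus>b\<in>B. if x = b then v b else \<zero>) = (\<Oplus>b\<in>B. \<zero>)"
        by (intro finsum_cong') auto
      then show ?thesis using False assms(3) unfolding free_on_carrier by simp
    qed
    finally show "v x = finsum (free_on R B) (\<lambda>b. v b \<odot>\<^bsub>free_on R B\<^esub> delta R b) B x" by simp
  qed
qed

lemma lin_map_free_expand:
  fixes R (structure)
  assumes "cring R" "module R N" "lin_map R (free_on R B) N f" "finite B" "v \<in> carrier (free_on R B)"
  shows "f v = finsum N (\<lambda>b. v b \<odot>\<^bsub>N\<^esub> f (delta R b)) B"
proof -
  interpret cring R by fact
  interpret F: module R "free_on R B" using free_on_module[OF assms(1)] .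
  interpret N: module R N by fact
  have vv: "\<And>a. v a \<in> carrier R" using free_on_val[OF ring_axioms assms(5)] .
  have tc: "(\<lambda>b. v b \<odot>\<^bsub>free_on R B\<^esub> delta R b) \<in> B \<rightarrow> carrier (free_on R B)"
    by (auto intro!: F.smult_closed delta_carrier[OF ring_axioms] vv)
  have "f v = f (finsum (free_on R B) (\<lambda>b. v b \<odot>\<^bsub>free_on R B\<^esub> delta R b) B)"
    using free_on_expand[OF assms(1,4,5)] by simp
  also have "\<dots> = finsum N (\<lambda>b. f (v b \<odot>\<^bsub>free_on R B\<^esub> delta R b)) B"
    by (rule lin_map_finsum[OF F.module_axioms assms(2,3,4) tc])
  also have "\<dots> = finsum N (\<lambda>b. v b \<odot>\<^bsub>N\<^esub> f (delta R b)) B"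
  proof (rule N.finsum_cong')
    show "\<And>b. b \<in> B \<Longrightarrow> f (v b \<odot>\<^bsub>free_on R B\<^esub> delta R b) = v b \<odot>\<^bsub>N\<^esub> f (delta R b)"
      by (rule lin_map_smult[OF assms(3)]) (auto simp: vv delta_carrier[OF ring_axioms])
    show "(\<lambda>b. v b \<odot>\<^bsub>N\<^esub> f (delta R b)) \<in> B \<rightarrow> carrier N"
      using vv lin_map_closed[OF assms(3) delta_carrier[OF ring_axioms]] module.smult_closed[OF assms(2)]
      by auto
  qed simp
  finally show ?thesis .
qed

lemma lin_map_free_on_sum:
  fixes R (structure)
  assumes "cring R" "module R Y" "finite B" and y: "\<And>b. b \<in> B \<Longrightarrow> y b \<in> carrier Y"
  shows "lin_map R (free_on R B) Y (\<lambda>v. finsum Y (\<lambda>b. v b \<odot>\<^bsub>Y\<^esub> y b) B)"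
  unfolding lin_map_def
proof (intro conjI ballI)
  interpret cring R by fact
  interpret Y: module R Y by fact
  have v: "v a \<in> carrier R" if "v \<in> carrier (free_on R B)" for v a using free_on_val[OF ring_axioms that] .
  have terms: "(\<lambda>b. v b \<odot>\<^bsub>Y\<^esub> y b) \<in> B \<rightarrow> carrier Y" if "v \<in> carrier (free_on R B)" for v
    using v[OF that] y by auto
  show "(\<lambda>v. finsum Y (\<lambda>b. v b \<odot>\<^bsub>Y\<^esub> y b) B) \<in> carrier (free_on R B) \<rightarrow> carrier Y"
    using terms by (auto intro: Y.finsum_closed)
  fix v assume v': "v \<in> carrier (free_on R B)"
  show "finsum Y (\<lambda>b. (v \<oplus>\<^bsub>free_on R B\<^esub> w) b \<odot>\<^bsub>Y\<^esub> y b) B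
      = finsum Y (\<lambda>b. v b \<odot>\<^bsub>Y\<^esub> y b) B \<oplus>\<^bsub>Y\<^esub> finsum Y (\<lambda>b. w b \<odot>\<^bsub>Y\<^esub> y b) B"
    if w: "w \<in> carrier (free_on R B)" for w
  proof -
    have "finsum Y (\<lambda>b. (v \<oplus>\<^bsub>free_on R B\<^esub> w) b \<odot>\<^bsub>Y\<^esub> y b) B
        = finsum Y (\<lambda>b. v b \<odot>\<^bsub>Y\<^esub> y b \<oplus>\<^bsub>Y\<^esub> w b \<odot>\<^bsub>Y\<^esub> y b) B"
      unfolding free_on_add by (rule Y.finsum_cong') (auto simp: v[OF v'] v[OF w] y Y.smult_l_distr)
    also have "\<dots> = finsum Y (\<lambda>b. v b \<odot>\<^bsub>Y\<^esub> y b) B \<oplus>\<^bsub>Y\<^esub> finsum Y (\<lambda>b. w b \<odot>\<^bsub>Y\<^esub> y b) B"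
      using terms[OF v'] terms[OF w] by (rule Y.finsum_addf)
    finally show ?thesis .
  qed
  show "finsum Y (\<lambda>b. (r \<odot>\<^bsub>free_on R B\<^esub> v) b \<odot>\<^bsub>Y\<^esub> y b) B
      = r \<odot>\<^bsub>Y\<^esub> finsum Y (\<lambda>b. v b \<odot>\<^bsub>Y\<^esub> y b) B" if r: "r \<in> carrier R" for r
  proof -
    have "finsum Y (\<lambda>b. (r \<odot>\<^bsub>free_on R B\<^esub> v) b \<odot>\<^bsub>Y\<^esub> y b) B
        = finsum Y (\<lambda>b. r \<odot>\<^bsub>Y\<^esub> (v b \<odot>\<^bsub>Y\<^esub> y b)) B"
      unfolding free_on_smult by (rule Y.finsum_cong') (auto simp: v[OF v'] y r Y.smult_assoc1)
    also have "\<dots> = r \<odot>\<^bsub>Y\<^esub> finsum Y (\<lambda>b. v b \<odot>\<^bsub>Y\<^esub> y b) B"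
      using Y.finsum_smult_ldistr[OF assms(3) r terms[OF v']] by simp
    finally show ?thesis .
  qed
qed

lemma free_on_lift:
  fixes R (structure)
  assumes "cring R" and Y: "module R Y" and Z: "module R Z" and B: "finite B"
    and p: "lin_map R Y Z p" and f: "lin_map R (free_on R B) Z f"
    and img: "f ` carrier (free_on R B) \<subseteq> p ` carrier Y"
  shows "\<exists>g. lin_map R (free_on R B) Y g \<and> (\<forall>x\<in>carrier (free_on R B). p (g x) = f x)"
proof -
  interpret cring R by fact
  interpret Y: module R Y by fact
  interpret Z: module R Z by fact
  have "\<forall>b\<in>B. \<exists>y. y \<in> carrier Y \<and> p y = f (delta R b)"
  proof
    fix b assume "b \<in> B"
    then have "f (delta R b) \<in> p ` carrier Y" by (rule subsetD[OF img imageI[OF delta_carrier[OF ring_axioms]]])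
    then show "\<exists>y. y \<in> carrier Y \<and> p y = f (delta R b)" by (auto simp: image_iff)
  qed
  then obtain y where "\<forall>b\<in>B. y b \<in> carrier Y \<and> p (y b) = f (delta R b)"
    using bchoice[of B "\<lambda>b y. y \<in> carrier Y \<and> p y = f (delta R b)"] by blast
  then have y: "\<And>b. b \<in> B \<Longrightarrow> y b \<in> carrier Y" "\<And>b. b \<in> B \<Longrightarrow> p (y b) = f (delta R b)" by auto
  define g where "g v = finsum Y (\<lambda>b. v b \<odot>\<^bsub>Y\<^esub> y b) B" for v
  have g: "lin_map R (free_on R B) Y g"
    unfolding g_def by (rule lin_map_free_on_sum[OF cring_axioms Y B y(1)])
  have "p (g v) = f v" if v: "v \<in> carrier (free_on R B)" for v
  proof -
    have vb: "v b \<in> carrier R" for b using free_on_val[OF ring_axioms v] .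
    have "p (g v) = finsum Z (\<lambda>b. p (v b \<odot>\<^bsub>Y\<^esub> y b)) B"
      unfolding g_def using vb y(1) by (intro lin_map_finsum[OF Y Z p B]) auto
    also have "\<dots> = finsum Z (\<lambda>b. v b \<odot>\<^bsub>Z\<^esub> f (delta R b)) B"
      using lin_map_smult[OF p] vb y lin_map_closed[OF f delta_carrier[OF ring_axioms]]
      by (intro Z.finsum_cong') auto
    also have "\<dots> = f v" using lin_map_free_expand[OF cring_axioms Z f B v] by simp
    finally show ?thesis .
  qed
  then show ?thesis using g by blast
qed

lemma lin_map_free_on_apply:
  fixes R (structure)
  assumes "cring R" "finite C" "lin_map R (free_on R C) (free_on R B) h" "v \<in> carrier (free_on R C)"
  shows "h v x = (\<Oplus>c\<in>C. v c \<otimes> h (delta R c) x)"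
proof -
  interpret cring R by fact
  interpret F: module R "free_on R B" using free_on_module[OF cring_axioms] .
  have "(\<lambda>c. v c \<odot>\<^bsub>free_on R B\<^esub> h (delta R c)) \<in> C \<rightarrow> carrier (free_on R B)"
    using free_on_val[OF ring_axioms assms(4)] lin_map_closed[OF assms(3) delta_carrier[OF ring_axioms]]
    by (intro Pi_I F.smult_closed)
  then show ?thesis
    using lin_map_free_expand[OF assms(1) F.module_axioms assms(3,2,4)] free_on_finsum_apply[OF assms(1,2)]
    by (simp add: free_on_smult)
qed

lemma range_subset_ideal_add:
  "ideal I R \<Longrightarrow> range v \<subseteq> I \<Longrightarrow> range w \<subseteq> I \<Longrightarrow> range (v \<oplus>\<^bsub>free_on R B\<^esub> w) \<subseteq> I"
  unfolding free_on_add image_subset_iff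
  by (auto intro: additive_subgroup.a_closed[OF ideal.axioms(1)])

lemma submodule_finsum:
  assumes "module R M" "submodule K R M" "finite A" "f \<in> A \<rightarrow> K"
  shows "finsum M f A \<in> K"
  using assms(3,4)
proof (induction A rule: finite_induct)
  case empty
  interpret module R M by fact
  show ?case using submodule.axioms(1)[OF assms(2)] by (simp add: subgroup.one_closed[of K "add_monoid M", simplified])
next
  case (insert y A)
  interpret module R M by fact
  have "f \<in> A \<rightarrow> carrier M" "f y \<in> carrier M" using insert(4) submoduleE(1)[OF assms(2)] by auto
  then have "finsum M f (insert y A) = f y \<oplus>\<^bsub>M\<^esub> finsum M f A"
    using insert by (intro finsum_insert) auto
  then show ?case using submoduleE(5)[OF assms(2)] insert by auto
qed

lemma submodule_range_subset_ideal:
  fixes R (structure)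
  assumes "cring R" and I: "ideal I R"
  shows "submodule {v \<in> carrier (free_on R B). range v \<subseteq> I} R (free_on R B)"
    (is "submodule ?K R ?F")
proof -
  interpret cring R by fact
  interpret F: module R ?F using free_on_module[OF cring_axioms] .
  show ?thesis
  proof (rule F.submoduleI)
    show "\<zero>\<^bsub>?F\<^esub> \<in> ?K"
      using I F.zero_closed by (auto simp: free_on_zero additive_subgroup.zero_closed ideal.axioms(1))
    show "\<ominus>\<^bsub>?F\<^esub> a \<in> ?K" if "a \<in> ?K" for a
    proof -
      have "\<ominus>\<^bsub>?F\<^esub> a = (\<lambda>x. \<ominus> a x)" using that by (simp add: free_on_neg[OF cring_axioms])
      moreover have "\<ominus>\<^bsub>?F\<^esub> a \<in> carrier ?F" using that by simp
      ultimately show ?thesis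
        using that I by (auto simp: additive_subgroup.a_inv_closed ideal.axioms(1))
    qed
    show "a \<oplus>\<^bsub>?F\<^esub> b \<in> ?K" if "a \<in> ?K" "b \<in> ?K" for a b
      using that by (simp add: range_subset_ideal_add[OF I])
    show "a \<odot>\<^bsub>?F\<^esub> v \<in> ?K" if "a \<in> carrier R" "v \<in> ?K" for a v
      using that I F.smult_closed by (auto simp: free_on_smult ideal.I_l_closed)
  qed auto
qed

lemma span_ideal_multiples_free_on:
  fixes R (structure)
  assumes "cring R" and I: "ideal I R" and B: "finite B"
  shows "span R (free_on R B) {r \<odot>\<^bsub>free_on R B\<^esub> y | r y. r \<in> I \<and> y \<in> carrier (free_on R B)}
           = {v \<in> carrier (free_on R B). range v \<subseteq> I}"
    (is "span R ?F ?G = ?K")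
proof -
  interpret cring R by fact
  interpret F: module R ?F using free_on_module[OF cring_axioms] .
  have sub: "I \<subseteq> carrier R" using I by (simp add: additive_subgroup.a_subset ideal.axioms(1))
  have "submodule ?K R ?F" by (rule submodule_range_subset_ideal[OF cring_axioms I])
  moreover have "r \<odot>\<^bsub>?F\<^esub> y \<in> ?K" if r: "r \<in> I" and y: "y \<in> carrier ?F" for r y
  proof -
    have "r \<odot>\<^bsub>?F\<^esub> y \<in> carrier ?F" using r sub y F.smult_closed by blast
    moreover have "range (r \<odot>\<^bsub>?F\<^esub> y) \<subseteq> I"
      using r free_on_val[OF ring_axioms y] I by (auto simp: free_on_smult ideal.I_r_closed)
    ultimately show ?thesis by simp
  qed
  then have "?G \<subseteq> ?K" by blast
  ultimately have "span R ?F ?G \<subseteq> ?K" unfolding span_def by blast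
  moreover have "v \<in> span R ?F ?G" if v: "v \<in> ?K" for v
    unfolding span_def
  proof (rule InterI, clarify)
    fix K assume K: "submodule K R ?F" "?G \<subseteq> K"
    have "(\<lambda>b. v b \<odot>\<^bsub>?F\<^esub> delta R b) \<in> B \<rightarrow> K"
    proof
      fix b assume b: "b \<in> B"
      have "v b \<in> I" using v by auto
      then have "v b \<odot>\<^bsub>?F\<^esub> delta R b \<in> ?G" using delta_carrier[OF ring_axioms b] by blast
      then show "v b \<odot>\<^bsub>?F\<^esub> delta R b \<in> K" using K(2) by blast
    qed
    then have "finsum ?F (\<lambda>b. v b \<odot>\<^bsub>?F\<^esub> delta R b) B \<in> K"
      by (rule submodule_finsum[OF F.module_axioms K(1) B])
    then show "v \<in> K" using free_on_expand[OF cring_axioms B] v by simp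
  qed
  ultimately show ?thesis by blast
qed

lemma lin_map_range_subset_ideal:
  fixes R (structure)
  assumes "cring R" and I: "ideal I R" and B: "finite B"
    and h: "lin_map R (free_on R B) (free_on R C) h"
    and v: "v \<in> carrier (free_on R B)" "range v \<subseteq> I"
  shows "range (h v) \<subseteq> I"
proof (rule image_subsetI)
  interpret cring R by fact
  fix x
  have "(\<Oplus>b\<in>B. v b \<otimes> h (delta R b) x) \<in> I"
  proof (intro ideal_finsum[OF ring_axioms I B] ballI)
    fix b assume "b \<in> B"
    then have "h (delta R b) x \<in> carrier R"
      by (rule free_on_val[OF ring_axioms lin_map_closed[OF h delta_carrier[OF ring_axioms]]])
    then show "v b \<otimes> h (delta R b) x \<in> I" using v(2) ideal.I_r_closed[OF I] by blast
  qed
  then show "h v x \<in> I" using lin_map_free_on_apply[OF cring_axioms B h v(1)] by simp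
qed

lemma minimal_complex_free_on_iff:
  assumes L: "local_ring R" and B: "\<And>i. finite (B i)"
    and d: "\<And>i. lin_map R (free_on R (B (Suc i))) (free_on R (B i)) (d (Suc i))"
  shows "minimal_complex R (\<lambda>i. free_on R (B i)) d \<longleftrightarrow>
    (\<forall>i. \<forall>x\<in>carrier (free_on R (B (Suc i))). range (d (Suc i) x) \<subseteq> max_ideal R)"
  unfolding minimal_complex_def
    span_ideal_multiples_free_on[OF local_ring_cring[OF L] max_ideal_ideal[OF L] B]
  using lin_map_closed[OF d] by (force simp: image_subset_iff)

section \<open>Comparison of free resolutions\<close>

lemma card_le_if_retract_mod_max_ideal:
  fixes R (structure)
  assumes L: "local_ring R" and B: "finite B" and C: "finite C"
    and \<alpha>: "lin_map R (free_on R B) (free_on R C) \<alpha>"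
    and \<beta>: "lin_map R (free_on R C) (free_on R B) \<beta>"
    and retract: "\<forall>x\<in>carrier (free_on R B). range (\<beta> (\<alpha> x) \<ominus>\<^bsub>free_on R B\<^esub> x) \<subseteq> max_ideal R"
  shows "card B \<le> card C"
proof -
  interpret cring R using L by (rule local_ring_cring)
  define A where "A c b = \<alpha> (delta R b) c" for c b
  define A' where "A' b c = \<beta> (delta R c) b" for b c
  have dB: "delta R b \<in> carrier (free_on R B)" if "b \<in> B" for b
    using delta_carrier[OF ring_axioms that] .
  have dC: "delta R c \<in> carrier (free_on R C)" if "c \<in> C" for c
    using delta_carrier[OF ring_axioms that] .
  have A: "\<forall>c\<in>C. \<forall>b\<in>B. A c b \<in> carrier R"
    unfolding A_def using free_on_val[OF ring_axioms lin_map_closed[OF \<alpha> dB]] by blast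
  have A': "\<forall>b\<in>B. \<forall>c\<in>C. A' b c \<in> carrier R"
    unfolding A'_def using free_on_val[OF ring_axioms lin_map_closed[OF \<beta> dC]] by blast
  have "left_inverse_mod_max_ideal R C B A' A"
    unfolding left_inverse_mod_max_ideal_def
  proof (intro ballI)
    fix i j assume i: "i \<in> B" and j: "j \<in> B"
    let ?v = "\<alpha> (delta R j)"
    have v: "?v \<in> carrier (free_on R C)" using lin_map_closed[OF \<alpha> dB[OF j]] .
    have "\<beta> ?v i = (\<Oplus>c\<in>C. ?v c \<otimes> \<beta> (delta R c) i)"
      by (rule lin_map_free_on_apply[OF cring_axioms C \<beta> v])
    also have "\<dots> = (\<Oplus>c\<in>C. A' i c \<otimes> A c j)"
    proof (rule finsum_cong')
      show "?v c \<otimes> \<beta> (delta R c) i = A' i c \<otimes> A c j" if "c \<in> C" for c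
      proof -
        have "A c j \<in> carrier R" "A' i c \<in> carrier R" using A A' i j that by auto
        then show ?thesis unfolding A_def A'_def by (simp add: m_comm)
      qed
      show "(\<lambda>c. A' i c \<otimes> A c j) \<in> C \<rightarrow> carrier R" using A A' i j by auto
    qed simp
    finally have "\<beta> ?v i = (\<Oplus>c\<in>C. A' i c \<otimes> A c j)" .
    moreover have "(\<beta> ?v \<ominus>\<^bsub>free_on R B\<^esub> delta R j) i = \<beta> ?v i \<ominus> delta R j i"
      using free_on_minus[OF cring_axioms lin_map_closed[OF \<beta> v] dB[OF j]] by simp
    moreover have "(\<beta> ?v \<ominus>\<^bsub>free_on R B\<^esub> delta R j) i \<in> max_ideal R"
      using retract dB[OF j] by blast
    ultimately show "(\<Oplus>c\<in>C. A' i c \<otimes> A c j) \<ominus> (if i = j then \<one> else \<zero>) \<in> max_ideal R"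
      by (simp add: delta_def)
  qed
  then show ?thesis by (rule card_le_if_left_inverse_mod_max_ideal[OF L B C A A'])
qed

text \<open>The correction \<phi> is d h for a lift h of \<phi> through the next differential, which produces the
  next level; altogether this is the homotopy \<beta> \<alpha> - id = d h + h d.\<close>

definition syzygy_comparison :: "'a ring \<Rightarrow> ('a, 'b) module \<Rightarrow> ('a, 'c) module \<Rightarrow> 'b set \<Rightarrow> 'c set
    \<Rightarrow> ('b \<Rightarrow> 'c) \<Rightarrow> ('c \<Rightarrow> 'b) \<Rightarrow> ('b \<Rightarrow> 'b) \<Rightarrow> bool" where
  "syzygy_comparison R P Q K L \<alpha> \<beta> \<phi> \<longleftrightarrow> lin_map R P Q \<alpha> \<and> lin_map R Q P \<beta> \<and> \<alpha> ` K \<subseteq> L \<and> \<beta> ` L \<subseteq> K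
     \<and> lin_map R P P \<phi> \<and> \<phi> ` carrier P \<subseteq> K \<and> (\<forall>x\<in>K. \<beta> (\<alpha> x) = x \<oplus>\<^bsub>P\<^esub> \<phi> x)"

lemma free_on_lift_comp:
  fixes R (structure)
  assumes "cring R" and Q: "module R Q" and B: "finite B"
    and d: "lin_map R (free_on R B) P d" and d': "lin_map R (free_on R C) Q d'"
    and \<alpha>: "lin_map R P Q \<alpha>" and \<alpha>K: "\<alpha> ` d ` carrier (free_on R B) \<subseteq> d' ` carrier (free_on R C)"
  shows "\<exists>\<alpha>'. lin_map R (free_on R B) (free_on R C) \<alpha>' \<and> (\<forall>x\<in>carrier (free_on R B). d' (\<alpha>' x) = \<alpha> (d x))"
proof -
  have "(\<lambda>x. \<alpha> (d x)) ` carrier (free_on R B) \<subseteq> d' ` carrier (free_on R C)"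
    using \<alpha>K by (simp add: image_image)
  then show ?thesis
    using free_on_lift[OF assms(1) free_on_module[OF assms(1)] Q B d' lin_map_comp[OF d \<alpha>]] by blast
qed

lemma syzygy_comparison_next:
  fixes R (structure)
  assumes "cring R" and P: "module R P" and Q: "module R Q"
    and d: "lin_map R (free_on R B) P d" and d': "lin_map R (free_on R C) Q d'"
    and cmp: "syzygy_comparison R P Q (d ` carrier (free_on R B)) (d' ` carrier (free_on R C)) \<alpha> \<beta> \<phi>"
    and h: "lin_map R P (free_on R B) h" and dh: "\<forall>x\<in>carrier P. d (h x) = \<phi> x"
    and \<alpha>': "lin_map R (free_on R B) (free_on R C) \<alpha>'" and d'\<alpha>': "\<forall>x\<in>carrier (free_on R B). d' (\<alpha>' x) = \<alpha> (d x)"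
    and \<beta>': "lin_map R (free_on R C) (free_on R B) \<beta>'" and d\<beta>': "\<forall>y\<in>carrier (free_on R C). d (\<beta>' y) = \<beta> (d' y)"
  shows "syzygy_comparison R (free_on R B) (free_on R C) (lin_ker (free_on R B) P d) (lin_ker (free_on R C) Q d')
    \<alpha>' \<beta>' (\<lambda>x. (\<beta>' (\<alpha>' x) \<ominus>\<^bsub>free_on R B\<^esub> x) \<ominus>\<^bsub>free_on R B\<^esub> h (d x))"
proof -
  interpret cring R by fact
  interpret P: module R P by fact
  interpret F: module R "free_on R B" using free_on_module[OF cring_axioms] .
  let ?F = "free_on R B" and ?G = "free_on R C"
  define \<phi>' where "\<phi>' x = (\<beta>' (\<alpha>' x) \<ominus>\<^bsub>?F\<^esub> x) \<ominus>\<^bsub>?F\<^esub> h (d x)" for x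
  have \<alpha>: "lin_map R P Q \<alpha>" and \<beta>: "lin_map R Q P \<beta>" and \<phi>: "lin_map R P P \<phi>"
    and \<beta>\<alpha>: "\<forall>x\<in>d ` carrier ?F. \<beta> (\<alpha> x) = x \<oplus>\<^bsub>P\<^esub> \<phi> x"
    using cmp unfolding syzygy_comparison_def by auto
  have \<phi>': "lin_map R ?F ?F \<phi>'"
    unfolding \<phi>'_def
    by (intro lin_map_diff[OF F.module_axioms F.module_axioms] lin_map_comp[OF \<alpha>' \<beta>'] lin_map_id
        lin_map_comp[OF d h])
  have closed: "\<beta>' (\<alpha>' x) \<in> carrier ?F" "d x \<in> carrier P" "h (d x) \<in> carrier ?F" if "x \<in> carrier ?F" for x
    using that lin_map_closed[OF \<alpha>'] lin_map_closed[OF \<beta>'] lin_map_closed[OF d] lin_map_closed[OF h]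
    by auto
  have "\<phi>' x \<in> lin_ker ?F P d" if x: "x \<in> carrier ?F" for x
  proof -
    have "d (\<phi>' x) = (\<beta> (\<alpha> (d x)) \<ominus>\<^bsub>P\<^esub> d x) \<ominus>\<^bsub>P\<^esub> \<phi> (d x)"
      unfolding \<phi>'_def using closed[OF x] x dh d\<beta>' d'\<alpha>' lin_map_closed[OF \<alpha>' x]
      by (simp add: lin_map_minus[OF F.module_axioms P d])
    also have "\<dots> = \<zero>\<^bsub>P\<^esub>"
      using \<beta>\<alpha> x closed[OF x] lin_map_closed[OF \<phi>] by (simp add: P.add_minus_minus_cancel)
    finally show ?thesis using lin_map_closed[OF \<phi>' x] unfolding lin_ker_def by simp
  qed
  moreover have "\<alpha>' x \<in> lin_ker ?G Q d'" if "x \<in> lin_ker ?F P d" for x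
    using that lin_map_closed[OF \<alpha>'] d'\<alpha>' lin_map_zero[OF P Q \<alpha>] unfolding lin_ker_def by auto
  moreover have "\<beta>' y \<in> lin_ker ?F P d" if "y \<in> lin_ker ?G Q d'" for y
    using that lin_map_closed[OF \<beta>'] d\<beta>' lin_map_zero[OF Q P \<beta>] unfolding lin_ker_def by auto
  moreover have "\<beta>' (\<alpha>' x) = x \<oplus>\<^bsub>?F\<^esub> \<phi>' x" if "x \<in> lin_ker ?F P d" for x
  proof -
    have x: "x \<in> carrier ?F" "d x = \<zero>\<^bsub>P\<^esub>" using that unfolding lin_ker_def by auto
    then have "\<phi>' x = \<beta>' (\<alpha>' x) \<ominus>\<^bsub>?F\<^esub> x"
      unfolding \<phi>'_def using closed[OF x(1)] lin_map_zero[OF P F.module_axioms h] by (simp add: a_minus_def)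
    then show ?thesis using closed[OF x(1)] x(1) by (simp add: F.add_minus_cancel_left)
  qed
  ultimately show ?thesis
    unfolding syzygy_comparison_def \<phi>'_def[symmetric] using \<alpha>' \<beta>' \<phi>' by (simp add: image_subset_iff)
qed

lemma syzygy_comparison_lift:
  fixes R (structure)
  assumes "cring R" and P: "module R P" and Q: "module R Q" and B: "finite B" and C: "finite C"
    and d: "lin_map R (free_on R B) P d" and d': "lin_map R (free_on R C) Q d'"
    and cmp: "syzygy_comparison R P Q (d ` carrier (free_on R B)) (d' ` carrier (free_on R C)) \<alpha> \<beta> \<phi>"
    and h: "lin_map R P (free_on R B) h" and dh: "\<forall>x\<in>carrier P. d (h x) = \<phi> x"
  shows "\<exists>\<alpha>' \<beta>' \<phi>'. syzygy_comparison R (free_on R B) (free_on R C)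
      (lin_ker (free_on R B) P d) (lin_ker (free_on R C) Q d') \<alpha>' \<beta>' \<phi>'
    \<and> (\<forall>x\<in>carrier (free_on R B). \<beta>' (\<alpha>' x) \<ominus>\<^bsub>free_on R B\<^esub> x = \<phi>' x \<oplus>\<^bsub>free_on R B\<^esub> h (d x))"
proof -
  interpret cring R by fact
  interpret F: module R "free_on R B" using free_on_module[OF cring_axioms] .
  have \<alpha>: "lin_map R P Q \<alpha>" and \<beta>: "lin_map R Q P \<beta>"
    and \<alpha>K: "\<alpha> ` d ` carrier (free_on R B) \<subseteq> d' ` carrier (free_on R C)"
    and \<beta>K: "\<beta> ` d' ` carrier (free_on R C) \<subseteq> d ` carrier (free_on R B)"
    using cmp unfolding syzygy_comparison_def by simp_all
  obtain \<alpha>' where \<alpha>': "lin_map R (free_on R B) (free_on R C) \<alpha>'"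
    "\<forall>x\<in>carrier (free_on R B). d' (\<alpha>' x) = \<alpha> (d x)"
    using free_on_lift_comp[OF cring_axioms Q B d d' \<alpha> \<alpha>K] by blast
  obtain \<beta>' where \<beta>': "lin_map R (free_on R C) (free_on R B) \<beta>'"
    "\<forall>y\<in>carrier (free_on R C). d (\<beta>' y) = \<beta> (d' y)"
    using free_on_lift_comp[OF cring_axioms P C d' d \<beta> \<beta>K] by blast
  define \<phi>' where "\<phi>' x = (\<beta>' (\<alpha>' x) \<ominus>\<^bsub>free_on R B\<^esub> x) \<ominus>\<^bsub>free_on R B\<^esub> h (d x)" for x
  have "\<beta>' (\<alpha>' x) \<ominus>\<^bsub>free_on R B\<^esub> x = \<phi>' x \<oplus>\<^bsub>free_on R B\<^esub> h (d x)" if x: "x \<in> carrier (free_on R B)" for x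
    using lin_map_closed[OF \<beta>'(1) lin_map_closed[OF \<alpha>'(1) x]] lin_map_closed[OF h lin_map_closed[OF d x]] x
    unfolding \<phi>'_def by (simp add: F.minus_add_cancel)
  moreover have "syzygy_comparison R (free_on R B) (free_on R C)
      (lin_ker (free_on R B) P d) (lin_ker (free_on R C) Q d') \<alpha>' \<beta>' \<phi>'"
    unfolding \<phi>'_def[abs_def] by (rule syzygy_comparison_next[OF assms(1-3) d d' cmp h dh \<alpha>' \<beta>'])
  ultimately show ?thesis by (intro exI conjI ballI)
qed
lemma resolution_lin_ker_0:
  "is_resolution R N F d e \<Longrightarrow> lin_ker (F 0) N e = d 1 ` carrier (F 1)"
  by (simp add: is_resolution_def)

lemma resolution_lin_ker_Suc:
  assumes "is_resolution R N F d e"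
  shows "lin_ker (F (Suc i)) (F i) (d (Suc i)) = d (Suc (Suc i)) ` carrier (F (Suc (Suc i)))"
proof -
  have "\<forall>i\<ge>1. lin_ker (F i) (F (i - 1)) (d i) = d (Suc i) ` carrier (F (Suc i))"
    using assms unfolding is_resolution_def by (elim conjE)
  from this[rule_format, of "Suc i"] show ?thesis by simp
qed

lemma is_resolution_lin_map:
  "is_resolution R N F d e \<Longrightarrow> lin_map R (F (Suc i)) (F i) (d (Suc i))"
  by (simp add: is_resolution_def)

lemma is_resolution_augmentation:
  "is_resolution R N F d e \<Longrightarrow> module R N \<and> lin_map R (F 0) N e \<and> e ` carrier (F 0) = carrier N"
  by (simp add: is_resolution_def)

lemma minimal_complex_image_max_ideal:
  assumes L: "local_ring R" and min: "minimal_complex R (\<lambda>i. free_on R (B i)) d" and B: "\<And>i. finite (B i)"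
    and d: "\<And>i. lin_map R (free_on R (B (Suc i))) (free_on R (B i)) (d (Suc i))"
    and x: "x \<in> d (Suc i) ` carrier (free_on R (B (Suc i)))"
  shows "range x \<subseteq> max_ideal R"
proof -
  obtain y where "y \<in> carrier (free_on R (B (Suc i)))" "x = d (Suc i) y" using x by blast
  then show ?thesis
    using min unfolding minimal_complex_free_on_iff[where B = B and d = d, OF L B d] by simp
qed

definition resolution_comparison :: "'a ring \<Rightarrow> (nat \<Rightarrow> 'c set) \<Rightarrow> (nat \<Rightarrow> ('c \<Rightarrow> 'a) \<Rightarrow> 'c \<Rightarrow> 'a)
    \<Rightarrow> (nat \<Rightarrow> 'd set) \<Rightarrow> (nat \<Rightarrow> ('d \<Rightarrow> 'a) \<Rightarrow> 'd \<Rightarrow> 'a) \<Rightarrow> nat \<Rightarrow> bool" where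
  "resolution_comparison R BF dF BG dG k \<longleftrightarrow> (\<exists>\<alpha> \<beta> \<phi>.
     syzygy_comparison R (free_on R (BF k)) (free_on R (BG k)) (dF (Suc k) ` carrier (free_on R (BF (Suc k))))
       (dG (Suc k) ` carrier (free_on R (BG (Suc k)))) \<alpha> \<beta> \<phi>
     \<and> (\<forall>x\<in>carrier (free_on R (BF k)). range (\<beta> (\<alpha> x) \<ominus>\<^bsub>free_on R (BF k)\<^esub> x) \<subseteq> max_ideal R))"

lemma resolution_comparison_0:
  fixes R (structure)
  assumes L: "local_ring R"
    and rF: "is_resolution R N (\<lambda>i. free_on R (BF i)) dF eF"
    and mF: "minimal_complex R (\<lambda>i. free_on R (BF i)) dF" and BF: "\<And>i. finite (BF i)"
    and rG: "is_resolution R N (\<lambda>i. free_on R (BG i)) dG eG" and BG: "\<And>i. finite (BG i)"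
  shows "resolution_comparison R BF dF BG dG 0"
proof -
  interpret cring R using L by (rule local_ring_cring)
  let ?F = "free_on R (BF 0)" and ?G = "free_on R (BG 0)"
  have m: "ideal (max_ideal R) R" using max_ideal_ideal[OF L] .
  have N: "module R N" and eF: "lin_map R ?F N eF" "eF ` carrier ?F = carrier N"
    and eG: "lin_map R ?G N eG" "eG ` carrier ?G = carrier N"
    using is_resolution_augmentation[OF rF] is_resolution_augmentation[OF rG] by simp_all
  have F: "module R ?F" by (rule free_on_module[OF cring_axioms])
  interpret N: module R N by (rule N)
  have "syzygy_comparison R N N (eF ` carrier ?F) (eG ` carrier ?G) (\<lambda>x. x) (\<lambda>x. x) (\<lambda>x. \<zero>\<^bsub>N\<^esub>)"
    unfolding syzygy_comparison_def eF(2) eG(2) by (auto simp: lin_map_id lin_map_zero_map[OF N])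
  moreover have "\<forall>x\<in>carrier N. eF \<zero>\<^bsub>?F\<^esub> = \<zero>\<^bsub>N\<^esub>" using lin_map_zero[OF F N eF(1)] by simp
  ultimately have "\<exists>\<alpha> \<beta> \<phi>. syzygy_comparison R ?F ?G (lin_ker ?F N eF) (lin_ker ?G N eG) \<alpha> \<beta> \<phi>
    \<and> (\<forall>x\<in>carrier ?F. \<beta> (\<alpha> x) \<ominus>\<^bsub>?F\<^esub> x = \<phi> x \<oplus>\<^bsub>?F\<^esub> \<zero>\<^bsub>?F\<^esub>)"
    by (rule syzygy_comparison_lift[OF cring_axioms N N BF BG eF(1) eG(1) _ lin_map_zero_map[OF F]])
  then obtain \<alpha> \<beta> \<phi> where
    cmp: "syzygy_comparison R ?F ?G (dF 1 ` carrier (free_on R (BF 1))) (dG 1 ` carrier (free_on R (BG 1))) \<alpha> \<beta> \<phi>"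
    and diff: "\<forall>x\<in>carrier ?F. \<beta> (\<alpha> x) \<ominus>\<^bsub>?F\<^esub> x = \<phi> x \<oplus>\<^bsub>?F\<^esub> \<zero>\<^bsub>?F\<^esub>"
    unfolding resolution_lin_ker_0[OF rF] resolution_lin_ker_0[OF rG] by blast
  have "range (\<beta> (\<alpha> x) \<ominus>\<^bsub>?F\<^esub> x) \<subseteq> max_ideal R" if x: "x \<in> carrier ?F" for x
  proof -
    have "\<phi> ` carrier ?F \<subseteq> dF (Suc 0) ` carrier (free_on R (BF (Suc 0)))"
      using cmp unfolding syzygy_comparison_def by simp
    then have "range (\<phi> x) \<subseteq> max_ideal R"
      by (intro minimal_complex_image_max_ideal[OF L mF BF is_resolution_lin_map[OF rF]] subsetD[OF _ imageI[OF x]])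
    moreover have "range (\<zero>\<^bsub>?F\<^esub>) \<subseteq> max_ideal R"
      using m by (auto simp: free_on_zero additive_subgroup.zero_closed ideal.axioms(1))
    ultimately show ?thesis using diff x range_subset_ideal_add[OF m] by simp
  qed
  then show ?thesis unfolding resolution_comparison_def using cmp by (intro exI conjI ballI) simp_all
qed

lemma resolution_comparison_Suc:
  fixes R (structure)
  assumes L: "local_ring R"
    and rF: "is_resolution R N (\<lambda>i. free_on R (BF i)) dF eF"
    and mF: "minimal_complex R (\<lambda>i. free_on R (BF i)) dF" and BF: "\<And>i. finite (BF i)"
    and rG: "is_resolution R N (\<lambda>i. free_on R (BG i)) dG eG" and BG: "\<And>i. finite (BG i)"
    and IH: "resolution_comparison R BF dF BG dG k"
  shows "resolution_comparison R BF dF BG dG (Suc k)"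
proof -
  interpret cring R using L by (rule local_ring_cring)
  let ?F = "\<lambda>i. free_on R (BF i)" and ?G = "\<lambda>i. free_on R (BG i)"
  have m: "ideal (max_ideal R) R" using max_ideal_ideal[OF L] .
  have F: "module R (?F i)" and G: "module R (?G i)" for i by (rule free_on_module[OF cring_axioms])+
  note dF = is_resolution_lin_map[OF rF] and dG = is_resolution_lin_map[OF rG]
  note syz_max = minimal_complex_image_max_ideal[OF L mF BF dF]
  obtain \<alpha> \<beta> \<phi> where
    cmp: "syzygy_comparison R (?F k) (?G k) (dF (Suc k) ` carrier (?F (Suc k))) (dG (Suc k) ` carrier (?G (Suc k))) \<alpha> \<beta> \<phi>"
    using IH unfolding resolution_comparison_def by blast
  then have \<phi>: "lin_map R (?F k) (?F k) \<phi>" and \<phi>K: "\<phi> ` carrier (?F k) \<subseteq> dF (Suc k) ` carrier (?F (Suc k))"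
    unfolding syzygy_comparison_def by simp_all
  obtain h where h: "lin_map R (?F k) (?F (Suc k)) h" and dh: "\<forall>x\<in>carrier (?F k). dF (Suc k) (h x) = \<phi> x"
    using free_on_lift[OF cring_axioms F F BF dF \<phi> \<phi>K] by blast
  from syzygy_comparison_lift[OF cring_axioms F G BF BG dF dG cmp h dh]
  obtain \<alpha>' \<beta>' \<phi>' where
    cmp': "syzygy_comparison R (?F (Suc k)) (?G (Suc k)) (dF (Suc (Suc k)) ` carrier (?F (Suc (Suc k))))
      (dG (Suc (Suc k)) ` carrier (?G (Suc (Suc k)))) \<alpha>' \<beta>' \<phi>'"
    and diff: "\<forall>x\<in>carrier (?F (Suc k)). \<beta>' (\<alpha>' x) \<ominus>\<^bsub>?F (Suc k)\<^esub> x = \<phi>' x \<oplus>\<^bsub>?F (Suc k)\<^esub> h (dF (Suc k) x)"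
    unfolding resolution_lin_ker_Suc[OF rF] resolution_lin_ker_Suc[OF rG] by blast
  have "range (\<beta>' (\<alpha>' x) \<ominus>\<^bsub>?F (Suc k)\<^esub> x) \<subseteq> max_ideal R" if x: "x \<in> carrier (?F (Suc k))" for x
  proof -
    have "\<phi>' ` carrier (?F (Suc k)) \<subseteq> dF (Suc (Suc k)) ` carrier (?F (Suc (Suc k)))"
      using cmp' unfolding syzygy_comparison_def by simp
    then have "range (\<phi>' x) \<subseteq> max_ideal R" by (intro syz_max subsetD[OF _ imageI[OF x]])
    moreover have "range (h (dF (Suc k) x)) \<subseteq> max_ideal R"
      by (rule lin_map_range_subset_ideal[OF cring_axioms m BF h lin_map_closed[OF dF x] syz_max[OF imageI[OF x]]])
    ultimately show ?thesis using diff x range_subset_ideal_add[OF m] by simp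
  qed
  then show ?thesis unfolding resolution_comparison_def using cmp' by (intro exI conjI ballI) simp_all
qed

lemma minimal_resolution_rank_le:
  assumes L: "local_ring R"
    and rF: "is_resolution R N (\<lambda>i. free_on R (BF i)) dF eF"
    and mF: "minimal_complex R (\<lambda>i. free_on R (BF i)) dF" and BF: "\<And>i. finite (BF i)"
    and rG: "is_resolution R N (\<lambda>i. free_on R (BG i)) dG eG" and BG: "\<And>i. finite (BG i)"
  shows "card (BF k) \<le> card (BG k)"
proof -
  have "resolution_comparison R BF dF BG dG k"
    by (induction k) (intro resolution_comparison_0[OF assms] resolution_comparison_Suc[OF assms])+
  then obtain \<alpha> \<beta> \<phi> where "syzygy_comparison R (free_on R (BF k)) (free_on R (BG k))
      (dF (Suc k) ` carrier (free_on R (BF (Suc k)))) (dG (Suc k) ` carrier (free_on R (BG (Suc k)))) \<alpha> \<beta> \<phi>"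
    and retract: "\<forall>x\<in>carrier (free_on R (BF k)). range (\<beta> (\<alpha> x) \<ominus>\<^bsub>free_on R (BF k)\<^esub> x) \<subseteq> max_ideal R"
    unfolding resolution_comparison_def by blast
  then have "lin_map R (free_on R (BF k)) (free_on R (BG k)) \<alpha>" "lin_map R (free_on R (BG k)) (free_on R (BF k)) \<beta>"
    unfolding syzygy_comparison_def by simp_all
  then show ?thesis by (rule card_le_if_retract_mod_max_ideal[OF L BF BG _ _ retract])
qed

section \<open>Reindexing free resolutions\<close>

definition reindex :: "'a ring \<Rightarrow> 'd set \<Rightarrow> ('d \<Rightarrow> 'c) \<Rightarrow> ('c \<Rightarrow> 'a) \<Rightarrow> 'd \<Rightarrow> 'a" where
  "reindex R D \<sigma> v = (\<lambda>k. if k \<in> D then v (\<sigma> k) else \<zero>\<^bsub>R\<^esub>)"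

lemma reindex_carrier:
  assumes "\<sigma> ` D \<subseteq> B" "finite D" "v \<in> carrier (free_on R B)"
  shows "reindex R D \<sigma> v \<in> carrier (free_on R D)"
proof -
  have "{k. reindex R D \<sigma> v k \<noteq> \<zero>\<^bsub>R\<^esub>} \<subseteq> D" unfolding reindex_def by auto
  then show ?thesis using assms unfolding free_on_carrier reindex_def by (auto intro: finite_subset)
qed

lemma reindex_lin:
  assumes "ring R" "\<sigma> ` D \<subseteq> B" "finite D"
  shows "lin_map R (free_on R B) (free_on R D) (reindex R D \<sigma>)"
  unfolding lin_map_def
proof (intro conjI ballI)
  show "reindex R D \<sigma> \<in> carrier (free_on R B) \<rightarrow> carrier (free_on R D)"
    using reindex_carrier[OF assms(2,3)] by auto
  show "reindex R D \<sigma> (x \<oplus>\<^bsub>free_on R B\<^esub> y) = reindex R D \<sigma> x \<oplus>\<^bsub>free_on R D\<^esub> reindex R D \<sigma> y" for x y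
    unfolding reindex_def free_on_add using assms(1) by (auto simp: ring.ring_simprules)
  show "reindex R D \<sigma> (r \<odot>\<^bsub>free_on R B\<^esub> x) = r \<odot>\<^bsub>free_on R D\<^esub> reindex R D \<sigma> x" if "r \<in> carrier R" for r x
    unfolding reindex_def free_on_smult using assms(1) that by (auto simp: ring.ring_simprules)
qed

lemma reindex_reindex:
  assumes "\<sigma> ` D \<subseteq> B" "\<forall>k\<in>D. \<tau> (\<sigma> k) = k" "v \<in> carrier (free_on R D)"
  shows "reindex R D \<sigma> (reindex R B \<tau> v) = v"
  using assms unfolding reindex_def free_on_carrier by fastforce

lemma range_reindex_subset:
  "\<zero>\<^bsub>R\<^esub> \<in> I \<Longrightarrow> range v \<subseteq> I \<Longrightarrow> range (reindex R D \<sigma> v) \<subseteq> I"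
  unfolding reindex_def by auto

lemma free_on_iso_lessThan:
  assumes "ring R" "\<And>i. finite (B i)"
  obtains T S where "\<And>i. lin_map R (free_on R (B i)) (free_on R {..<card (B i)}) (T i)"
    "\<And>i. lin_map R (free_on R {..<card (B i)}) (free_on R (B i)) (S i)"
    "\<And>i v. v \<in> carrier (free_on R (B i)) \<Longrightarrow> S i (T i v) = v"
    "\<And>i w. w \<in> carrier (free_on R {..<card (B i)}) \<Longrightarrow> T i (S i w) = w"
    "\<And>i I v. \<zero>\<^bsub>R\<^esub> \<in> I \<Longrightarrow> range v \<subseteq> I \<Longrightarrow> range (T i v) \<subseteq> I"
proof -
  have "\<forall>i. \<exists>\<sigma>. bij_betw \<sigma> {..<card (B i)} (B i)"
    using ex_bij_betw_nat_finite[OF assms(2)] by (simp add: atLeast0LessThan)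
  then obtain \<sigma> where \<sigma>: "\<And>i. bij_betw (\<sigma> i) {..<card (B i)} (B i)" by metis
  let ?\<tau> = "\<lambda>i. inv_into {..<card (B i)} (\<sigma> i)"
  have \<sigma>D: "\<sigma> i ` {..<card (B i)} \<subseteq> B i" for i using \<sigma> by (simp add: bij_betw_def)
  have \<tau>B: "?\<tau> i ` B i \<subseteq> {..<card (B i)}" for i using bij_betw_inv_into[OF \<sigma>] by (simp add: bij_betw_def)
  show ?thesis
  proof (rule that[of "\<lambda>i. reindex R {..<card (B i)} (\<sigma> i)" "\<lambda>i. reindex R (B i) (?\<tau> i)"])
    show "lin_map R (free_on R (B i)) (free_on R {..<card (B i)}) (reindex R {..<card (B i)} (\<sigma> i))" for i
      by (rule reindex_lin[OF assms(1) \<sigma>D finite_lessThan])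
    show "lin_map R (free_on R {..<card (B i)}) (free_on R (B i)) (reindex R (B i) (?\<tau> i))" for i
      by (rule reindex_lin[OF assms(1) \<tau>B assms(2)])
    show "reindex R (B i) (?\<tau> i) (reindex R {..<card (B i)} (\<sigma> i) v) = v"
      if "v \<in> carrier (free_on R (B i))" for i v
      by (rule reindex_reindex[OF \<tau>B _ that]) (simp add: bij_betw_inv_into_right[OF \<sigma>])
    show "reindex R {..<card (B i)} (\<sigma> i) (reindex R (B i) (?\<tau> i) w) = w"
      if "w \<in> carrier (free_on R {..<card (B i)})" for i w
      by (rule reindex_reindex[OF \<sigma>D _ that]) (simp add: bij_betw_inv_into_left[OF \<sigma>])
  qed (rule range_reindex_subset)
qed

lemma Collect_conj_eq_image:
  assumes "S ` X' \<subseteq> X" "T ` X \<subseteq> X'" "\<forall>y\<in>X'. T (S y) = y" "\<forall>x\<in>X. S (T x) = x"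
  shows "{y \<in> X'. P (S y)} = T ` {x \<in> X. P x}"
  using assms by (auto simp: image_iff) (metis image_subset_iff)

lemma lin_ker_conj:
  assumes "S ` carrier X' \<subseteq> carrier X" "T ` carrier X \<subseteq> carrier X'"
    and "\<forall>y\<in>carrier X'. T (S y) = y" "\<forall>x\<in>carrier X. S (T x) = x"
    and U: "\<forall>x\<in>carrier X. U (f x) = \<zero>\<^bsub>Y'\<^esub> \<longleftrightarrow> f x = \<zero>\<^bsub>Y\<^esub>"
  shows "lin_ker X' Y' (\<lambda>y. U (f (S y))) = T ` lin_ker X Y f"
proof -
  have "lin_ker X' Y' (\<lambda>y. U (f (S y))) = T ` {x \<in> carrier X. U (f x) = \<zero>\<^bsub>Y'\<^esub>}"
    unfolding lin_ker_def by (rule Collect_conj_eq_image[OF assms(1-4)])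
  also have "{x \<in> carrier X. U (f x) = \<zero>\<^bsub>Y'\<^esub>} = lin_ker X Y f"
    using U unfolding lin_ker_def by auto
  finally show ?thesis .
qed

lemma is_resolution_transport:
  fixes R (structure)
  assumes res: "is_resolution R N F d e" and F': "\<And>i. module R (F' i)"
    and T: "\<And>i. lin_map R (F i) (F' i) (T i)" and S: "\<And>i. lin_map R (F' i) (F i) (S i)"
    and ST: "\<And>i x. x \<in> carrier (F i) \<Longrightarrow> S i (T i x) = x"
    and TS: "\<And>i y. y \<in> carrier (F' i) \<Longrightarrow> T i (S i y) = y"
  shows "is_resolution R N F' (\<lambda>i y. T (i - 1) (d i (S i y))) (\<lambda>y. e (S 0 y))"
proof -
  have N: "module R N" and F: "\<And>i. module R (F i)"
    and d: "\<And>i. lin_map R (F (Suc i)) (F i) (d (Suc i))"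
    and e: "lin_map R (F 0) N e" "e ` carrier (F 0) = carrier N"
    using res unfolding is_resolution_def by simp_all
  have S_onto: "S i ` carrier (F' i) = carrier (F i)" for i
    using lin_map_closed[OF S] lin_map_closed[OF T] ST by (auto simp: image_iff) (metis)
  have inv: "S i ` carrier (F' i) \<subseteq> carrier (F i)" "T i ` carrier (F i) \<subseteq> carrier (F' i)"
    "\<forall>y\<in>carrier (F' i). T i (S i y) = y" "\<forall>x\<in>carrier (F i). S i (T i x) = x" for i
    using lin_map_closed[OF S] lin_map_closed[OF T] ST TS by auto
  have image: "(\<lambda>y. T i (d (Suc i) (S (Suc i) y))) ` carrier (F' (Suc i)) = T i ` d (Suc i) ` carrier (F (Suc i))"
    for i
  proof -
    have "(\<lambda>y. T i (d (Suc i) (S (Suc i) y))) ` carrier (F' (Suc i))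
        = T i ` d (Suc i) ` S (Suc i) ` carrier (F' (Suc i))" by (simp add: image_image)
    then show ?thesis using S_onto[of "Suc i"] by simp
  qed
  have T_eq_zero: "T i x = \<zero>\<^bsub>F' i\<^esub> \<longleftrightarrow> x = \<zero>\<^bsub>F i\<^esub>" if "x \<in> carrier (F i)" for i x
    using ST[OF that] lin_map_zero[OF F F' T] lin_map_zero[OF F' F S] by metis
  have ker_0: "lin_ker (F' 0) N (\<lambda>y. e (S 0 y)) = T 0 ` lin_ker (F 0) N e"
    by (rule lin_ker_conj[OF inv, where U = "\<lambda>y. y"]) simp
  have ker_Suc: "lin_ker (F' (Suc k)) (F' k) (\<lambda>y. T k (d (Suc k) (S (Suc k) y)))
      = T (Suc k) ` lin_ker (F (Suc k)) (F k) (d (Suc k))" for k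
    by (rule lin_ker_conj[OF inv]) (use T_eq_zero lin_map_closed[OF d] in blast)
  show ?thesis
    unfolding is_resolution_def
  proof (intro conjI allI impI)
    show "lin_map R (F' (Suc i)) (F' i) (\<lambda>y. T (Suc i - 1) (d (Suc i) (S (Suc i) y)))" for i
      using lin_map_comp[OF lin_map_comp[OF S d] T] by simp
    show "lin_map R (F' 0) N (\<lambda>y. e (S 0 y))" using lin_map_comp[OF S e(1)] .
    show "(\<lambda>y. e (S 0 y)) ` carrier (F' 0) = carrier N" using S_onto e(2) by (simp add: image_image[symmetric])
    show "lin_ker (F' 0) N (\<lambda>y. e (S 0 y)) = (\<lambda>y. T (1 - 1) (d 1 (S 1 y))) ` carrier (F' 1)"
      using ker_0 image[of 0] resolution_lin_ker_0[OF res] by simp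
    show "lin_ker (F' i) (F' (i - 1)) (\<lambda>y. T (i - 1) (d i (S i y)))
        = (\<lambda>y. T (Suc i - 1) (d (Suc i) (S (Suc i) y))) ` carrier (F' (Suc i))" if "i \<ge> 1" for i
      using that ker_Suc[of "i - 1"] image[of i] resolution_lin_ker_Suc[OF res, of "i - 1"] by (cases i) simp_all
  qed (use N F' in simp_all)
qed
lemma min_free_res_of_minimal_resolution:
  fixes R (structure)
  assumes L: "local_ring R" and res: "is_resolution R N (\<lambda>i. free_on R (B i)) d e"
    and min: "minimal_complex R (\<lambda>i. free_on R (B i)) d" and B: "\<And>i. finite (B i)"
  shows "\<exists>d' e'. min_free_res R N (\<lambda>i. card (B i)) d' e'"
proof -
  interpret cring R using L by (rule local_ring_cring)
  let ?F = "\<lambda>i. free_on R (B i)" and ?F' = "\<lambda>i. free_on R {..<card (B i)}"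
  obtain T S where T: "\<And>i. lin_map R (?F i) (?F' i) (T i)" and S: "\<And>i. lin_map R (?F' i) (?F i) (S i)"
    and ST: "\<And>i v. v \<in> carrier (?F i) \<Longrightarrow> S i (T i v) = v"
    and TS: "\<And>i w. w \<in> carrier (?F' i) \<Longrightarrow> T i (S i w) = w"
    and T_range: "\<And>i I v. \<zero> \<in> I \<Longrightarrow> range v \<subseteq> I \<Longrightarrow> range (T i v) \<subseteq> I"
    using free_on_iso_lessThan[where B = B, OF ring_axioms B] by blast
  have T_max: "range (T i v) \<subseteq> max_ideal R" if "range v \<subseteq> max_ideal R" for i v
    using T_range[OF _ that] max_ideal_ideal[OF L] by (simp add: additive_subgroup.zero_closed ideal.axioms(1))
  define d' where "d' = (\<lambda>i y. T (i - 1) (d i (S i y)))"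
  have F': "module R (?F' i)" for i by (rule free_on_module[OF cring_axioms])
  have res': "is_resolution R N ?F' d' (\<lambda>y. e (S 0 y))"
    unfolding d'_def by (rule is_resolution_transport[where T = T and S = S, OF res F' T S ST TS])
  have d: "lin_map R (?F (Suc i)) (?F i) (d (Suc i))" for i
    using res unfolding is_resolution_def by simp
  have d': "lin_map R (?F' (Suc i)) (?F' i) (d' (Suc i))" for i
    using res' unfolding is_resolution_def by simp
  have "range (d' (Suc i) y) \<subseteq> max_ideal R" if "y \<in> carrier (?F' (Suc i))" for i y
    using min lin_map_closed[OF S that] T_max
    unfolding d'_def minimal_complex_free_on_iff[where B = B and d = d, OF L B d] by simp
  then have "minimal_complex R ?F' d'"
    using minimal_complex_free_on_iff[where B = "\<lambda>i. {..<card (B i)}" and d = d', OF L _ d'] by simp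
  then show ?thesis using res' unfolding min_free_res_def by blast
qed

section \<open>Betti numbers and projective dimension\<close>

lemma betti_eq_rank:
  assumes L: "local_ring R" and res: "min_free_res R N b d e"
  shows "betti R N i = b i"
proof -
  define b' where "b' = (SOME b. \<exists>d e. min_free_res R N b d e)"
  obtain d' e' where res': "min_free_res R N b' d' e'"
    unfolding b'_def using someI_ex[of "\<lambda>b. \<exists>d e. min_free_res R N b d e"] res by blast
  have "card {..<b i} \<le> card {..<b' i}" "card {..<b' i} \<le> card {..<b i}"
    using minimal_resolution_rank_le[OF L, where BF = "\<lambda>i. {..<b i}" and BG = "\<lambda>i. {..<b' i}"]
      minimal_resolution_rank_le[OF L, where BF = "\<lambda>i. {..<b' i}" and BG = "\<lambda>i. {..<b i}"]
      res res' unfolding min_free_res_def by blast+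
  then show ?thesis unfolding betti_def b'_def[symmetric] by simp
qed

lemma proj_dim_le:
  fixes b :: "nat \<Rightarrow> nat"
  assumes "is_resolution R N (\<lambda>i. free_on R {..<b i}) d e" "\<forall>i>p. b i = 0"
  shows "proj_dim R N \<le> enat p"
  unfolding proj_dim_def using assms by (intro Inf_lower) blast

lemma proj_dim_eq_0_if_rank_0:
  fixes R (structure) and b :: "nat \<Rightarrow> nat"
  assumes "cring R" and res: "is_resolution R N (\<lambda>i. free_on R {..<b i}) d e" and b0: "b 0 = 0"
  shows "proj_dim R N = 0"
proof -
  interpret cring R by fact
  let ?Z = "free_on R {..<(0::nat)}"
  have Z_carrier: "carrier ?Z = {\<lambda>x. \<zero>}" by (auto simp: free_on_def fun_eq_iff)
  have N: "module R N" using res unfolding is_resolution_def by simp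
  have Z: "module R ?Z" by (rule free_on_module[OF cring_axioms])
  have e: "lin_map R ?Z N e" "e ` carrier ?Z = carrier N"
    using res b0 unfolding is_resolution_def by auto
  have "e (\<lambda>x. \<zero>) = \<zero>\<^bsub>N\<^esub>" using lin_map_zero[OF Z N e(1)] by (simp add: free_on_zero)
  then have "is_resolution R N (\<lambda>i. ?Z) (\<lambda>i v k. \<zero>) e"
    using N Z e lin_map_zero_map[OF Z]
    unfolding is_resolution_def lin_ker_def Z_carrier by (auto simp: free_on_zero)
  then have "proj_dim R N \<le> enat 0" by (intro proj_dim_le[where b = "\<lambda>i. 0"]) auto
  then show ?thesis by (simp add: zero_enat_def[symmetric])
qed

section \<open>The complex S_j F\<close>

lemma SB_finite: "finite (SB n m j t)"
proof -
  have "SB n m j t \<subseteq> multisets_of_size {..<n} (j - t) \<times> Pow {..<m}"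
    unfolding SB_def multisets_of_size_def by auto
  then show ?thesis by (rule finite_subset) auto
qed

lemma SB_empty: "j < t \<Longrightarrow> SB n m j t = {}"
  unfolding SB_def by auto

lemma card_SB_ge:
  assumes "0 < n" "t \<le> j"
  shows "m choose t \<le> card (SB n m j t)"
proof -
  let ?A = "{E. E \<subseteq> {..<m} \<and> card E = t}"
  have "inj_on (\<lambda>E. (replicate_mset (j - t) 0, E)) ?A" by (auto simp: inj_on_def)
  moreover have "(\<lambda>E. (replicate_mset (j - t) 0, E)) ` ?A \<subseteq> SB n m j t"
    using assms unfolding SB_def by (auto split: if_splits)
  ultimately have "card ?A \<le> card (SB n m j t)" by (intro card_inj_on_le SB_finite)
  then show ?thesis using n_subsets[of "{..<m}" t] by simp
qed

lemma Sd_range_max_ideal: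
  fixes R (structure)
  assumes L: "local_ring R" and phi: "\<forall>i<n. \<forall>s<m. phi i s \<in> max_ideal R"
    and v: "v \<in> carrier (SF R n m j t)"
  shows "range (Sd R phi n m j t v) \<subseteq> max_ideal R"
proof (rule image_subsetI)
  interpret cring R using L by (rule local_ring_cring)
  have m: "ideal (max_ideal R) R" by (rule max_ideal_ideal[OF L])
  have v_carrier: "v a \<in> carrier R" for a using free_on_val[OF ring_axioms v[unfolded SF_def]] .
  have sign: "wsign R E s \<in> carrier R" for E s unfolding wsign_def by auto
  have zero: "\<zero> \<in> max_ideal R" using m by (simp add: additive_subgroup.zero_closed ideal.axioms(1))
  fix Y
  have "(\<Oplus>s\<in>E. \<Oplus>i\<in>{..<n}. if (add_mset i c, E - {s}) = Y
          then wsign R E s \<otimes> phi i s \<otimes> v (c, E) else \<zero>) \<in> max_ideal R"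
    if cE: "(c, E) \<in> SB n m j t" for c E
  proof (intro ideal_finsum[OF ring_axioms m] ballI)
    have E: "E \<subseteq> {..<m}" using cE unfolding SB_def by auto
    then show "finite E" by (rule finite_subset) simp
    fix s i assume "s \<in> E" "i \<in> {..<n}"
    then have "phi i s \<in> max_ideal R" using phi E by auto
    then have "wsign R E s \<otimes> phi i s \<otimes> v (c, E) \<in> max_ideal R"
      using ideal.I_l_closed[OF m _ sign] ideal.I_r_closed[OF m _ v_carrier] by blast
    then show "(if (add_mset i c, E - {s}) = Y then wsign R E s \<otimes> phi i s \<otimes> v (c, E) else \<zero>)
        \<in> max_ideal R" using zero by simp
  qed simp
  then show "Sd R phi n m j t v Y \<in> max_ideal R"
    unfolding Sd_def by (intro ideal_finsum[OF ring_axioms m SB_finite]) auto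
qed

lemma mat_map_delta:
  fixes R (structure)
  assumes "ring R" "i < n" "s < m" "\<forall>i<n. \<forall>s<m. phi i s \<in> carrier R"
  shows "mat_map R phi n m (delta R s) i = phi i s"
proof -
  interpret ring R by fact
  have "mat_map R phi n m (delta R s) i = (\<Oplus>s'\<in>{..<m}. if s' = s then phi i s' else \<zero>)"
    unfolding mat_map_def using assms by (auto simp: delta_def intro: finsum_cong')
  also have "\<dots> = phi i s"
    by (rule add.finprod_singleton_swap) (use assms in auto)
  finally show ?thesis .
qed

lemma min_free_res_entries_in_max_ideal:
  fixes R (structure)
  assumes L: "local_ring R"
    and res: "min_free_res R M (\<lambda>i. if i = 0 then n else if i = 1 then m else 0)
               (\<lambda>i. if i = 1 then mat_map R phi n m else (\<lambda>v k. \<zero>)) eps"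
    and phi: "\<forall>i<n. \<forall>s<m. phi i s \<in> carrier R"
  shows "\<forall>i<n. \<forall>s<m. phi i s \<in> max_ideal R"
proof (intro allI impI)
  interpret cring R using L by (rule local_ring_cring)
  fix i s assume i: "i < n" and s: "s < m"
  let ?F = "\<lambda>i. free_on R {..<(if i = 0 then n else if i = 1 then m else 0)}"
  have "minimal_complex R ?F (\<lambda>i. if i = 1 then mat_map R phi n m else (\<lambda>v k. \<zero>))"
    using res unfolding min_free_res_def by simp
  from this[unfolded minimal_complex_def, rule_format, of 0]
  have "mat_map R phi n m ` carrier (free_on R {..<m}) \<subseteq> {v \<in> carrier (free_on R {..<n}). range v \<subseteq> max_ideal R}"
    using span_ideal_multiples_free_on[OF cring_axioms max_ideal_ideal[OF L] finite_lessThan] by simp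
  then have "range (mat_map R phi n m (delta R s)) \<subseteq> max_ideal R"
    using delta_carrier[OF ring_axioms, of s "{..<m}"] s by blast
  then have "mat_map R phi n m (delta R s) i \<in> max_ideal R" by (rule subsetD[OF _ rangeI])
  then show "phi i s \<in> max_ideal R" using mat_map_delta[OF ring_axioms i s phi] by simp
qed

lemma sym_pow_min_free_res:
  fixes R (structure)
  assumes L: "local_ring R"
    and res: "min_free_res R M (\<lambda>i. if i = 0 then n else if i = 1 then m else 0)
               (\<lambda>i. if i = 1 then mat_map R phi n m else (\<lambda>v k. \<zero>)) eps"
    and phi: "\<forall>i<n. \<forall>s<m. phi i s \<in> carrier R"
    and res_S: "is_resolution R (sym_pow R M j) (\<lambda>t. SF R n m j t) (\<lambda>t. Sd R phi n m j t) eps'"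
  shows "\<exists>d e. min_free_res R (sym_pow R M j) (\<lambda>t. card (SB n m j t)) d e"
proof -
  have phi_max: "\<forall>i<n. \<forall>s<m. phi i s \<in> max_ideal R"
    by (rule min_free_res_entries_in_max_ideal[OF L res phi])
  have res_S': "is_resolution R (sym_pow R M j) (\<lambda>t. free_on R (SB n m j t)) (\<lambda>t. Sd R phi n m j t) eps'"
    using res_S unfolding SF_def .
  have "lin_map R (free_on R (SB n m j (Suc t))) (free_on R (SB n m j t)) (Sd R phi n m j (Suc t))" for t
    using res_S' unfolding is_resolution_def by simp
  then have "minimal_complex R (\<lambda>t. free_on R (SB n m j t)) (\<lambda>t. Sd R phi n m j t)"
    using Sd_range_max_ideal[OF L phi_max] unfolding SF_def
    by (subst minimal_complex_free_on_iff[OF L SB_finite]) auto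
  then show ?thesis by (rule min_free_res_of_minimal_resolution[OF L res_S' _ SB_finite])
qed

theorem proposition6p5:
  fixes R :: "'a ring" and M :: "('a, 'b) module" and d j :: nat
  assumes "local_ring R"
    and "krull_dim R = enat d"
    and "j \<ge> 2"
    and "module R M"
    and "fin_gen R M"
    and "proj_dim R M = 1"
    and "SW R M j"
    and "betti R M 1 \<ge> d"
  shows "\<forall>t. enat t \<le> proj_dim R (sym_pow R M j) \<longrightarrow> d choose t \<le> betti R (sym_pow R M j) t"
proof -
  note L = \<open>local_ring R\<close>
  obtain n m phi eps eps' where
    res: "min_free_res R M (\<lambda>i. if i = 0 then n else if i = 1 then m else 0)
           (\<lambda>i. if i = 1 then mat_map R phi n m else (\<lambda>v k. \<zero>\<^bsub>R\<^esub>)) eps"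
    and phi: "\<forall>i<n. \<forall>s<m. phi i s \<in> carrier R"
    and res_S: "is_resolution R (sym_pow R M j) (\<lambda>t. SF R n m j t) (\<lambda>t. Sd R phi n m j t) eps'"
    using \<open>SW R M j\<close> unfolding SW_def by blast
  have "d \<le> m" using betti_eq_rank[OF L res, of 1] \<open>betti R M 1 \<ge> d\<close> by simp
  have "n \<noteq> 0"
    using proj_dim_eq_0_if_rank_0[OF local_ring_cring[OF L]] res \<open>proj_dim R M = 1\<close>
    unfolding min_free_res_def by fastforce
  obtain d' e' where res_S': "min_free_res R (sym_pow R M j) (\<lambda>t. card (SB n m j t)) d' e'"
    using sym_pow_min_free_res[OF L res phi res_S] by blast
  have "proj_dim R (sym_pow R M j) \<le> enat j"
    using res_S' SB_empty unfolding min_free_res_def by (intro proj_dim_le) auto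
  show ?thesis
  proof (intro allI impI)
    fix t assume "enat t \<le> proj_dim R (sym_pow R M j)"
    then have "t \<le> j" using \<open>proj_dim R (sym_pow R M j) \<le> enat j\<close> by (meson enat_ord_simps(1) order_trans)
    have "d choose t \<le> m choose t" using \<open>d \<le> m\<close> by (rule binomial_right_mono)
    also have "\<dots> \<le> card (SB n m j t)" using \<open>n \<noteq> 0\<close> \<open>t \<le> j\<close> by (intro card_SB_ge) auto
    also have "\<dots> = betti R (sym_pow R M j) t" using betti_eq_rank[OF L res_S'] by simp
    finally show "d choose t \<le> betti R (sym_pow R M j) t" .
  qed
qed

end
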